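(* Let $\mathcal T_{\mathbf q}={\mathbb K}_{\mathbf q}[T_1^{\pm1},\ldots,T_n^{\pm1}]$ be a simple quantum torus and let $R=\mathcal T_{\mathbf q}[X_1,\ldots,X_m]$ be the commutative polynomial ring over $\mathcal T_{\mathbf q}$ in $m$ central variables. Then: (a) $\operatorname{Z}(R)={\mathbb K}[X_1,\ldots,X_m]$; (b) $\operatorname{Der}(R)=\operatorname{InnDer}(R)\oplus\bigoplus_{i=1}^n\operatorname{Z}(R)D_i\oplus\bigoplus_{j=1}^m\operatorname{Z}(R)\partial_j$, where $D_i,\partial_j$ are the derivations of $R$ defined by $D_i(T_k)=\delta_{ik}T_k$, $D_i(X_k)=0$, $\partial_j(T_k)=0$, $\partial_j(X_k)=\delta_{jk}$.
   Context: ${\mathbb K}$ is a field of characteristic $0$. For a multiplicatively skew-symmetric matrix $\mathbf q=(q_{ij})\in M_n({\mathbb K}^* )$ (i.e. $q_{ii}=1$, $q_{ij}=q_{ji}^{-1}$), the quantum torus ${\mathbb K}_{\mathbf q}[T_1^{\pm1},\ldots,T_n^{\pm1}]$ is the ${\mathbb K}$-algebra generated by $T_1^{\pm1},\ldots,T_n^{\pm1}$ with relations $T_iT_i^{-1}=T_i^{-1}T_i=1$ and $T_jT_i=q_{ij}T_iT_j$. It is simple iff its center is ${\mathbb K}$. $\operatorname{Z}$, $\operatorname{Der}$, $\operatorname{InnDer}$ denote center, ${\mathbb K}$-derivations and inner derivations. *)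

theory Defs
  imports Main
begin

text \<open>Concrete model of R = K_q[T_1^{+-1},...,T_n^{+-1}][X_1,...,X_m].
  Elements are finitely supported K-valued functions on exponent pairs (a,b),
  a : nat => int (exponents of T_0..T_{n-1}), b : nat => nat (exponents of
  X_0..X_{m-1}); the element f stands for sum f(a,b) T^a X^b with the ordered
  monomial T^a = T_0^{a 0} ... T_{n-1}^{a (n-1)}.  Indices are 0-based.\<close>

type_synonym 'k qel = "(nat \<Rightarrow> int) \<times> (nat \<Rightarrow> nat) \<Rightarrow> 'k"

definition exps :: "nat \<Rightarrow> nat \<Rightarrow> ((nat \<Rightarrow> int) \<times> (nat \<Rightarrow> nat)) set" where
  "exps n m = {(a,b). (\<forall>i. n \<le> i \<longrightarrow> a i = 0) \<and> (\<forall>j. m \<le> j \<longrightarrow> b j = 0)}"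

definition qcarrier :: "nat \<Rightarrow> nat \<Rightarrow> ('k::zero) qel set" where
  "qcarrier n m = {f. finite {x. f x \<noteq> 0} \<and> {x. f x \<noteq> 0} \<subseteq> exps n m}"

definition mult_skew :: "(nat \<Rightarrow> nat \<Rightarrow> 'k::field) \<Rightarrow> nat \<Rightarrow> bool" where
  "mult_skew q n = (\<forall>i<n. \<forall>j<n. q i j \<noteq> 0 \<and> q i i = 1 \<and> q i j = inverse (q j i))"

text \<open>T^a T^c = qcoef q n a c * T^(a+c), using T_j T_i = q i j T_i T_j,
  i.e. T_i^{a_i} T_j^{c_j} = q j i ^ (a_i c_j) T_j^{c_j} T_i^{a_i}.\<close>
definition qcoef :: "(nat \<Rightarrow> nat \<Rightarrow> 'k::field) \<Rightarrow> nat \<Rightarrow> (nat \<Rightarrow> int) \<Rightarrow> (nat \<Rightarrow> int) \<Rightarrow> 'k" where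
  "qcoef q n a c = (\<Prod>i<n. \<Prod>j<i. (q j i) powi (a i * c j))"

definition qmult :: "(nat \<Rightarrow> nat \<Rightarrow> 'k::field) \<Rightarrow> nat \<Rightarrow> 'k qel \<Rightarrow> 'k qel \<Rightarrow> 'k qel" where
  "qmult q n f g = (\<lambda>c. \<Sum>x\<in>{x. f x \<noteq> 0}. \<Sum>y\<in>{y. g y \<noteq> 0}.
      if (\<lambda>i. fst x i + fst y i) = fst c \<and> (\<lambda>j. snd x j + snd y j) = snd c
      then qcoef q n (fst x) (fst y) * f x * g y else 0)"

definition qadd :: "('k::field) qel \<Rightarrow> 'k qel \<Rightarrow> 'k qel" where
  "qadd f g = (\<lambda>x. f x + g x)"

definition qsmult :: "'k::field \<Rightarrow> 'k qel \<Rightarrow> 'k qel" where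
  "qsmult c f = (\<lambda>x. c * f x)"

definition qzero :: "('k::field) qel" where
  "qzero = (\<lambda>_. 0)"

definition qone :: "('k::field) qel" where
  "qone = (\<lambda>x. if x = (\<lambda>_. 0, \<lambda>_. 0) then 1 else 0)"

definition qT :: "nat \<Rightarrow> ('k::field) qel" where
  "qT k = (\<lambda>x. if x = (\<lambda>i. if i = k then 1 else 0, \<lambda>_. 0) then 1 else 0)"

definition qX :: "nat \<Rightarrow> ('k::field) qel" where
  "qX k = (\<lambda>x. if x = (\<lambda>_. 0, \<lambda>j. if j = k then 1 else 0) then 1 else 0)"

definition qideal :: "(nat \<Rightarrow> nat \<Rightarrow> 'k::field) \<Rightarrow> nat \<Rightarrow> nat \<Rightarrow> 'k qel set \<Rightarrow> bool" where
  "qideal q n m I = (I \<subseteq> qcarrier n m \<and> qzero \<in> I \<and>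
     (\<forall>f\<in>I. \<forall>g\<in>I. qadd f g \<in> I) \<and>
     (\<forall>f\<in>qcarrier n m. \<forall>g\<in>I. qmult q n f g \<in> I \<and> qmult q n g f \<in> I))"

definition qtorus_simple :: "(nat \<Rightarrow> nat \<Rightarrow> 'k::field) \<Rightarrow> nat \<Rightarrow> bool" where
  "qtorus_simple q n = (\<forall>I. qideal q n 0 I \<longrightarrow> I = {qzero} \<or> I = qcarrier n 0)"

definition qcenter :: "(nat \<Rightarrow> nat \<Rightarrow> 'k::field) \<Rightarrow> nat \<Rightarrow> nat \<Rightarrow> 'k qel set" where
  "qcenter q n m = {z \<in> qcarrier n m. \<forall>f\<in>qcarrier n m. qmult q n z f = qmult q n f z}"

definition polyX :: "nat \<Rightarrow> nat \<Rightarrow> ('k::field) qel set" where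
  "polyX n m = {f \<in> qcarrier n m. \<forall>x. f x \<noteq> 0 \<longrightarrow> fst x = (\<lambda>_. 0)}"

definition is_qder :: "(nat \<Rightarrow> nat \<Rightarrow> 'k::field) \<Rightarrow> nat \<Rightarrow> nat \<Rightarrow> ('k qel \<Rightarrow> 'k qel) \<Rightarrow> bool" where
  "is_qder q n m D = (
     (\<forall>f\<in>qcarrier n m. D f \<in> qcarrier n m) \<and>
     (\<forall>f\<in>qcarrier n m. \<forall>g\<in>qcarrier n m. D (qadd f g) = qadd (D f) (D g)) \<and>
     (\<forall>c. \<forall>f\<in>qcarrier n m. D (qsmult c f) = qsmult c (D f)) \<and>
     (\<forall>f\<in>qcarrier n m. \<forall>g\<in>qcarrier n m.
        D (qmult q n f g) = qadd (qmult q n (D f) g) (qmult q n f (D g))))"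

definition qad :: "(nat \<Rightarrow> nat \<Rightarrow> 'k::field) \<Rightarrow> nat \<Rightarrow> 'k qel \<Rightarrow> 'k qel \<Rightarrow> 'k qel" where
  "qad q n u f = (\<lambda>x. qmult q n u f x - qmult q n f u x)"

text \<open>D_i (T^a X^b) = a_i T^a X^b, and partial_j (T^a X^b) = b_j T^a X^(b - e_j).\<close>
definition qDT :: "nat \<Rightarrow> ('k::field) qel \<Rightarrow> 'k qel" where
  "qDT i f = (\<lambda>x. of_int (fst x i) * f x)"

definition qDX :: "nat \<Rightarrow> ('k::field) qel \<Rightarrow> 'k qel" where
  "qDX j f = (\<lambda>(a,b). of_nat (b j + 1) * f (a, b(j := b j + 1)))"

definition qcomb :: "(nat \<Rightarrow> nat \<Rightarrow> 'k::field) \<Rightarrow> nat \<Rightarrow> nat \<Rightarrow> 'k qel \<Rightarrow> (nat \<Rightarrow> 'k qel) \<Rightarrow> (nat \<Rightarrow> 'k qel) \<Rightarrow> 'k qel \<Rightarrow> 'k qel" where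
  "qcomb q n m u z w f = (\<lambda>x. qad q n u f x + (\<Sum>i<n. qmult q n (z i) (qDT i f) x)
        + (\<Sum>j<m. qmult q n (w j) (qDX j f) x))"

end

theory Submission
  imports Defs
begin

text \<open>
  Centre: polynomials in the \<open>X\<^sub>j\<close> are central. Conversely, if \<open>T\<^sup>a X\<^sup>b\<close> occurs in a central
  element, then \<open>T\<^sup>a\<close> commutes with every \<open>T\<^sub>k\<close> and is therefore central; if \<open>a \<noteq> 0\<close>, the
  nonzero central element \<open>T\<^sup>a - 1\<close> would generate the whole simple torus, but comparing the
  extreme values of a linear functional on supports shows that it has no right inverse.

  Derivations: a derivation is determined by its values on the \<open>T\<^sub>i\<close> and \<open>X\<^sub>j\<close>, and the values
  \<open>D X\<^sub>j\<close> are central. Write \<open>G\<^sub>i(x)\<close> for the coefficient of \<open>T\<^sup>a\<^sup>+\<^sup>e\<^sup>i X\<^sup>b\<close> in \<open>D T\<^sub>i\<close>, and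
  \<open>c\<^sub>i(a)\<close> for the scalar with \<open>T\<^sup>a T\<^sub>i - T\<^sub>i T\<^sup>a = c\<^sub>i(a) T\<^sup>a\<^sup>+\<^sup>e\<^sup>i\<close>. Applying \<open>D\<close> to the commutation
  relation of \<open>T\<^sub>i\<close> and \<open>T\<^sub>j\<close> gives \<open>G\<^sub>j(x) c\<^sub>i(a) = G\<^sub>i(x) c\<^sub>j(a)\<close>, so
  \<open>G\<^sub>i(x) = u(x) c\<^sub>i(a) + z\<^sub>i(x)\<close> with \<open>z\<^sub>i\<close> supported on \<open>a = 0\<close> (by simplicity again), i.e.
  \<open>D T\<^sub>i = [u, T\<^sub>i] + z\<^sub>i D\<^sub>i T\<^sub>i\<close>. Then \<open>D - ad\<^sub>u - \<Sum> z\<^sub>i D\<^sub>i - \<Sum> D(X\<^sub>j) \<partial>\<^sub>j\<close> vanishes on the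
  generators, hence everywhere. Evaluating a vanishing combination on \<open>T\<^sub>k\<close> and \<open>X\<^sub>j\<close> gives
  uniqueness.
\<close>

section \<open>Supports, monomials and bilinearity\<close>

type_synonym qexp = "(nat \<Rightarrow> int) \<times> (nat \<Rightarrow> nat)"

definition qsupp :: "('k::zero) qel \<Rightarrow> qexp set" where
  "qsupp f = {x. f x \<noteq> 0}"

definition exp_add :: "qexp \<Rightarrow> qexp \<Rightarrow> qexp" where
  "exp_add x y = (\<lambda>i. fst x i + fst y i, \<lambda>j. snd x j + snd y j)"

definition qmonom :: "qexp \<Rightarrow> ('k::field) qel" where
  "qmonom x = (\<lambda>y. if y = x then 1 else 0)"

lemma qcarrier_iff: "f \<in> qcarrier n m \<longleftrightarrow> finite (qsupp f) \<and> qsupp f \<subseteq> exps n m"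
  by (simp add: qcarrier_def qsupp_def)

lemma exps_iff: "x \<in> exps n m \<longleftrightarrow> (\<forall>i. n \<le> i \<longrightarrow> fst x i = 0) \<and> (\<forall>j. m \<le> j \<longrightarrow> snd x j = 0)"
  by (cases x) (simp add: exps_def)

lemma exp_add_eq_iff:
  "c = exp_add x y \<longleftrightarrow> (\<lambda>i. fst x i + fst y i) = fst c \<and> (\<lambda>j. snd x j + snd y j) = snd c"
  by (cases c) (auto simp: exp_add_def)

lemma exp_add_commute: "exp_add x y = exp_add y x"
  by (simp add: exp_add_def add.commute)

lemma exp_add_assoc: "exp_add (exp_add x y) z = exp_add x (exp_add y z)"
  by (simp add: exp_add_def add.assoc)

lemma exp_add_exps: "x \<in> exps n m \<Longrightarrow> y \<in> exps n m \<Longrightarrow> exp_add x y \<in> exps n m"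
  by (auto simp: exps_iff exp_add_def)

lemma qmult_eq_sum_qsupp:
  "qmult q n f g c = (\<Sum>x\<in>qsupp f. \<Sum>y\<in>qsupp g.
      if c = exp_add x y then qcoef q n (fst x) (fst y) * f x * g y else 0)"
  unfolding qmult_def qsupp_def exp_add_eq_iff ..

lemma qmult_eq_sum_superset:
  assumes "finite S" "qsupp f \<subseteq> S" "finite T" "qsupp g \<subseteq> T"
  shows "qmult q n f g c = (\<Sum>x\<in>S. \<Sum>y\<in>T.
      if c = exp_add x y then qcoef q n (fst x) (fst y) * f x * g y else 0)"
proof -
  have "qmult q n f g c = (\<Sum>x\<in>qsupp f. \<Sum>y\<in>T.
      if c = exp_add x y then qcoef q n (fst x) (fst y) * f x * g y else 0)"
    unfolding qmult_eq_sum_qsupp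
    by (intro sum.cong refl sum.mono_neutral_left assms) (auto simp: qsupp_def)
  also have "\<dots> = (\<Sum>x\<in>S. \<Sum>y\<in>T.
      if c = exp_add x y then qcoef q n (fst x) (fst y) * f x * g y else 0)"
    by (intro sum.mono_neutral_left assms) (force simp: qsupp_def intro!: sum.neutral)+
  finally show ?thesis .
qed

lemma qsupp_qmult: "qsupp (qmult q n f g) \<subseteq> (\<lambda>(x, y). exp_add x y) ` (qsupp f \<times> qsupp g)"
proof
  fix c assume "c \<in> qsupp (qmult q n f g)"
  then obtain x y where "x \<in> qsupp f" "y \<in> qsupp g" "c = exp_add x y"
    unfolding qsupp_def qmult_eq_sum_qsupp[unfolded qsupp_def]
    by (smt (verit, del_insts) mem_Collect_eq sum.neutral)
  then show "c \<in> (\<lambda>(x, y). exp_add x y) ` (qsupp f \<times> qsupp g)"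
    by auto
qed

lemma qmult_closed: "f \<in> qcarrier n m \<Longrightarrow> g \<in> qcarrier n m \<Longrightarrow> qmult q n f g \<in> qcarrier n m"
proof -
  assume fg: "f \<in> qcarrier n m" "g \<in> qcarrier n m"
  have "finite ((\<lambda>(x, y). exp_add x y) ` (qsupp f \<times> qsupp g))"
    using fg by (auto simp: qcarrier_iff)
  moreover have "(\<lambda>(x, y). exp_add x y) ` (qsupp f \<times> qsupp g) \<subseteq> exps n m"
    using fg exp_add_exps by (fastforce simp: qcarrier_iff)
  ultimately show ?thesis
    unfolding qcarrier_iff using qsupp_qmult[of q n f g] by (meson finite_subset order_trans)
qed

lemma qadd_closed: "f \<in> qcarrier n m \<Longrightarrow> g \<in> qcarrier n m \<Longrightarrow> qadd f g \<in> qcarrier n m"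
proof -
  have "qsupp (qadd f g) \<subseteq> qsupp f \<union> qsupp g"
    by (auto simp: qsupp_def qadd_def)
  then show "f \<in> qcarrier n m \<Longrightarrow> g \<in> qcarrier n m \<Longrightarrow> qadd f g \<in> qcarrier n m"
    unfolding qcarrier_iff by (auto intro: finite_subset)
qed

lemma qsmult_closed: "f \<in> qcarrier n m \<Longrightarrow> qsmult c f \<in> qcarrier n m"
proof -
  have "qsupp (qsmult c f) \<subseteq> qsupp f"
    by (auto simp: qsupp_def qsmult_def)
  then show "f \<in> qcarrier n m \<Longrightarrow> qsmult c f \<in> qcarrier n m"
    unfolding qcarrier_iff by (auto intro: finite_subset)
qed

lemma qdiff_eq_qadd: "(\<lambda>x. f x - g x) = qadd f (qsmult (-1) g)"
  by (simp add: qadd_def qsmult_def fun_eq_iff)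

lemma qdiff_closed:
  "(f :: 'k::field qel) \<in> qcarrier n m \<Longrightarrow> g \<in> qcarrier n m \<Longrightarrow> (\<lambda>x. f x - g x) \<in> qcarrier n m"
  unfolding qdiff_eq_qadd[of f g] by (intro qadd_closed qsmult_closed)

lemma qzero_closed: "qzero \<in> qcarrier n m"
  by (simp add: qcarrier_iff qsupp_def qzero_def)

lemma qmonom_apply: "qmonom x y = (if y = x then 1 else 0)"
  by (simp add: qmonom_def)

lemma qsupp_qmonom: "qsupp (qmonom x) = {x}"
  by (auto simp: qsupp_def qmonom_def)

lemma qmonom_closed: "x \<in> exps n m \<Longrightarrow> qmonom x \<in> qcarrier n m"
  by (simp add: qcarrier_iff qsupp_qmonom)

lemma qone_eq_qmonom: "qone = qmonom (\<lambda>_. 0, \<lambda>_. 0)"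
  by (simp add: qone_def qmonom_def fun_eq_iff)

lemma qone_closed: "qone \<in> qcarrier n m"
  unfolding qone_eq_qmonom by (rule qmonom_closed) (simp add: exps_iff)

lemma qzero_apply [simp]: "qzero x = 0"
  by (simp add: qzero_def)

lemma qzero_iff_qsupp_empty: "f = qzero \<longleftrightarrow> qsupp f = {}"
  by (auto simp: qsupp_def fun_eq_iff)

lemma qadd_qzero_left [simp]: "qadd qzero f = f"
  by (simp add: qadd_def)

lemma qadd_qzero_right [simp]: "qadd f qzero = f"
  by (simp add: qadd_def)

lemma qsmult_qzero [simp]: "qsmult c qzero = qzero"
  by (simp add: qsmult_def qzero_def)

lemma qsmult_qsmult [simp]: "qsmult a (qsmult b f) = qsmult (a * b) f"
  by (simp add: qsmult_def fun_eq_iff)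

lemma qsmult_eq_qzero_iff: "qsmult c f = qzero \<longleftrightarrow> c = 0 \<or> f = qzero"
  by (auto simp: qsmult_def fun_eq_iff)

lemma qmult_qzero_left [simp]: "qmult q n qzero g = qzero"
  by (simp add: qmult_def qzero_def fun_eq_iff)

lemma qmult_qzero_right [simp]: "qmult q n f qzero = qzero"
  by (simp add: qmult_def qzero_def fun_eq_iff)

lemma qmult_qadd_left:
  assumes "f \<in> qcarrier n m" "g \<in> qcarrier n m" "h \<in> qcarrier n m"
  shows "qmult q n (qadd f g) h = qadd (qmult q n f h) (qmult q n g h)"
proof
  fix c
  define S where "S = qsupp f \<union> qsupp g"
  have S: "finite S" "qsupp f \<subseteq> S" "qsupp g \<subseteq> S" "qsupp (qadd f g) \<subseteq> S"
    using assms by (auto simp: S_def qcarrier_iff qsupp_def qadd_def)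
  have T: "finite (qsupp h)"
    using assms by (simp add: qcarrier_iff)
  show "qmult q n (qadd f g) h c = qadd (qmult q n f h) (qmult q n g h) c"
    unfolding qmult_eq_sum_superset[OF S(1) S(4) T order_refl]
      qmult_eq_sum_superset[OF S(1) S(2) T order_refl] qmult_eq_sum_superset[OF S(1) S(3) T order_refl]
    by (simp add: qadd_def sum.distrib[symmetric] algebra_simps if_distrib cong: if_cong)
qed

lemma qmult_qadd_right:
  assumes "f \<in> qcarrier n m" "g \<in> qcarrier n m" "h \<in> qcarrier n m"
  shows "qmult q n h (qadd f g) = qadd (qmult q n h f) (qmult q n h g)"
proof
  fix c
  define S where "S = qsupp f \<union> qsupp g"
  have S: "finite S" "qsupp f \<subseteq> S" "qsupp g \<subseteq> S" "qsupp (qadd f g) \<subseteq> S"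
    using assms by (auto simp: S_def qcarrier_iff qsupp_def qadd_def)
  have T: "finite (qsupp h)"
    using assms by (simp add: qcarrier_iff)
  show "qmult q n h (qadd f g) c = qadd (qmult q n h f) (qmult q n h g) c"
    unfolding qmult_eq_sum_superset[OF T order_refl S(1) S(4)]
      qmult_eq_sum_superset[OF T order_refl S(1) S(2)] qmult_eq_sum_superset[OF T order_refl S(1) S(3)]
    by (simp add: qadd_def sum.distrib[symmetric] algebra_simps if_distrib cong: if_cong)
qed

lemma qmult_qsmult_left:
  assumes "f \<in> qcarrier n m" "h \<in> qcarrier n m"
  shows "qmult q n (qsmult a f) h = qsmult a (qmult q n f h)"
proof
  fix c
  have fin: "finite (qsupp f)" "finite (qsupp h)" "qsupp (qsmult a f) \<subseteq> qsupp f"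
    using assms by (auto simp: qcarrier_iff qsupp_def qsmult_def)
  show "qmult q n (qsmult a f) h c = qsmult a (qmult q n f h) c"
    unfolding qmult_eq_sum_superset[OF fin(1,3,2) order_refl]
      qmult_eq_sum_superset[OF fin(1) order_refl fin(2) order_refl]
    by (simp add: qsmult_def sum_distrib_left algebra_simps if_distrib cong: if_cong)
qed

lemma qmult_qsmult_right:
  assumes "f \<in> qcarrier n m" "h \<in> qcarrier n m"
  shows "qmult q n h (qsmult a f) = qsmult a (qmult q n h f)"
proof
  fix c
  have fin: "finite (qsupp f)" "finite (qsupp h)" "qsupp (qsmult a f) \<subseteq> qsupp f"
    using assms by (auto simp: qcarrier_iff qsupp_def qsmult_def)
  show "qmult q n h (qsmult a f) c = qsmult a (qmult q n h f) c"
    unfolding qmult_eq_sum_superset[OF fin(2) order_refl fin(1,3)]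
      qmult_eq_sum_superset[OF fin(2) order_refl fin(1) order_refl]
    by (simp add: qsmult_def sum_distrib_left algebra_simps if_distrib cong: if_cong)
qed

lemma qmult_qdiff_left:
  assumes "f \<in> qcarrier n m" "g \<in> qcarrier n m" "h \<in> qcarrier n m"
  shows "qmult q n (\<lambda>x. f x - g x) h = (\<lambda>x. qmult q n f h x - qmult q n g h x)"
  using assms by (subst (1 2) qdiff_eq_qadd)
    (simp add: qmult_qadd_left qmult_qsmult_left qsmult_closed)

lemma qmult_qdiff_right:
  assumes "f \<in> qcarrier n m" "g \<in> qcarrier n m" "h \<in> qcarrier n m"
  shows "qmult q n h (\<lambda>x. f x - g x) = (\<lambda>x. qmult q n h f x - qmult q n h g x)"
  using assms by (subst (1 2) qdiff_eq_qadd)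
    (simp add: qmult_qadd_right qmult_qsmult_right qsmult_closed)

section \<open>Linear maps and associativity\<close>

definition qlinear :: "nat \<Rightarrow> nat \<Rightarrow> (('k::field) qel \<Rightarrow> 'k qel) \<Rightarrow> bool" where
  "qlinear n m F \<longleftrightarrow> (\<forall>f\<in>qcarrier n m. \<forall>g\<in>qcarrier n m. F (qadd f g) = qadd (F f) (F g))
     \<and> (\<forall>c. \<forall>f\<in>qcarrier n m. F (qsmult c f) = qsmult c (F f))"

lemma qlinear_qzero: "qlinear n m F \<Longrightarrow> F qzero = qzero"
  using qzero_closed[of n m] unfolding qlinear_def
  by (metis qsmult_eq_qzero_iff)

lemma qlinear_eqI:
  assumes F: "qlinear n m F" and G: "qlinear n m G"
    and monom: "\<And>x. x \<in> exps n m \<Longrightarrow> F (qmonom x) = G (qmonom x)"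
    and f: "f \<in> qcarrier n m"
  shows "F f = G f"
proof -
  have "F f = G f" if "finite S" "f \<in> qcarrier n m" "qsupp f = S" for S f
    using that
  proof (induction S arbitrary: f rule: finite_induct)
    case empty
    then have "f = qzero"
      by (simp add: qzero_iff_qsupp_empty)
    then show ?case
      using qlinear_qzero[OF F] qlinear_qzero[OF G] by (simp only:)
  next
    case (insert x S)
    define f' where "f' = f(x := 0)"
    have "x \<in> exps n m"
      using insert.prems by (auto simp: qcarrier_iff)
    then have x: "qsmult (f x) (qmonom x) \<in> qcarrier n m"
      by (intro qsmult_closed qmonom_closed)
    have "qsupp f' = S"
      using insert.hyps(2) insert.prems(2) by (auto simp: qsupp_def f'_def)
    with insert.hyps(1) insert.prems(1) have f': "f' \<in> qcarrier n m" "qsupp f' = S"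
      by (auto simp: qcarrier_iff qsupp_def f'_def split: if_splits)
    have split: "f = qadd (qsmult (f x) (qmonom x)) f'"
      by (auto simp: fun_eq_iff qadd_def qsmult_def qmonom_def f'_def)
    have expand: "H f = qadd (qsmult (f x) (H (qmonom x))) (H f')" if "qlinear n m H" for H
      using that x f' qmonom_closed[OF \<open>x \<in> exps n m\<close>] unfolding qlinear_def by (subst split) auto
    have "F f = qadd (qsmult (f x) (F (qmonom x))) (F f')"
      by (rule expand[OF F])
    also have "\<dots> = qadd (qsmult (f x) (G (qmonom x))) (G f')"
      using insert.IH[OF f'] monom[OF \<open>x \<in> exps n m\<close>] by simp
    also have "\<dots> = G f"
      by (rule expand[OF G, symmetric])
    finally show ?case .
  qed
  then show ?thesis
    using f by (auto simp: qcarrier_iff)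
qed

lemma qlinear_qmult_right: "h \<in> qcarrier n m \<Longrightarrow> qlinear n m (\<lambda>f. qmult q n f h)"
  by (simp add: qlinear_def qmult_qadd_left qmult_qsmult_left)

lemma qlinear_qmult_left: "h \<in> qcarrier n m \<Longrightarrow> qlinear n m (\<lambda>f. qmult q n h f)"
  by (simp add: qlinear_def qmult_qadd_right qmult_qsmult_right)

lemma qlinear_comp:
  "qlinear n m F \<Longrightarrow> (\<And>f. f \<in> qcarrier n m \<Longrightarrow> F f \<in> qcarrier n m) \<Longrightarrow> qlinear n m G
   \<Longrightarrow> qlinear n m (\<lambda>f. G (F f))"
  by (simp add: qlinear_def qadd_closed qsmult_closed)

lemma qlinear_qadd: "qlinear n m F \<Longrightarrow> qlinear n m G \<Longrightarrow> qlinear n m (\<lambda>f. qadd (F f) (G f))"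
  by (simp add: qlinear_def qadd_def qsmult_def fun_eq_iff algebra_simps)

lemma qmult_qmonom_qmonom:
  "qmult q n (qmonom x) (qmonom y) = qsmult (qcoef q n (fst x) (fst y)) (qmonom (exp_add x y))"
proof
  fix c
  have "qmult q n (qmonom x) (qmonom y) c
      = (if c = exp_add x y then qcoef q n (fst x) (fst y) else 0)"
    unfolding qmult_eq_sum_qsupp qsupp_qmonom by (simp add: qmonom_def)
  then show "qmult q n (qmonom x) (qmonom y) c
      = qsmult (qcoef q n (fst x) (fst y)) (qmonom (exp_add x y)) c"
    by (simp add: qsmult_def qmonom_def)
qed

lemma eq_exp_add_torus_iff:
  "c = exp_add (a, \<lambda>_. 0) y \<longleftrightarrow> y = (\<lambda>i. fst c i - a i, snd c)"
  "c = exp_add y (a, \<lambda>_. 0) \<longleftrightarrow> y = (\<lambda>i. fst c i - a i, snd c)"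
  by (auto simp: exp_add_def prod_eq_iff fun_eq_iff)

lemma qmult_torus_qmonom_left:
  assumes "finite (qsupp g)"
  shows "qmult q n (qmonom (a, \<lambda>_. 0)) g c
    = qcoef q n a (\<lambda>i. fst c i - a i) * g (\<lambda>i. fst c i - a i, snd c)"
proof -
  have "qmult q n (qmonom (a, \<lambda>_. 0)) g c
      = (\<Sum>y\<in>qsupp g. if y = (\<lambda>i. fst c i - a i, snd c) then qcoef q n a (fst y) * g y else 0)"
    unfolding qmult_eq_sum_qsupp qsupp_qmonom by (simp add: qmonom_apply eq_exp_add_torus_iff cong: if_cong)
  then show ?thesis
    using assms by (simp add: sum.delta' qsupp_def)
qed

lemma qmult_torus_qmonom_right:
  assumes "finite (qsupp g)"
  shows "qmult q n g (qmonom (a, \<lambda>_. 0)) c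
    = qcoef q n (\<lambda>i. fst c i - a i) a * g (\<lambda>i. fst c i - a i, snd c)"
proof -
  have "qmult q n g (qmonom (a, \<lambda>_. 0)) c
      = (\<Sum>y\<in>qsupp g. if y = (\<lambda>i. fst c i - a i, snd c) then qcoef q n (fst y) a * g y else 0)"
    unfolding qmult_eq_sum_qsupp qsupp_qmonom by (simp add: qmonom_apply eq_exp_add_torus_iff cong: if_cong)
  then show ?thesis
    using assms by (simp add: sum.delta' qsupp_def)
qed

lemma qcoef_zero_left [simp]: "qcoef q n (\<lambda>_. 0) c = 1"
  by (simp add: qcoef_def)

lemma qcoef_zero_right [simp]: "qcoef q n c (\<lambda>_. 0) = 1"
  by (simp add: qcoef_def)

lemma qmult_qone_left: "f \<in> qcarrier n m \<Longrightarrow> qmult q n qone f = f"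
  unfolding qone_eq_qmonom by (rule ext) (simp add: qmult_torus_qmonom_left qcarrier_iff)

lemma qmult_qone_right: "f \<in> qcarrier n m \<Longrightarrow> qmult q n f qone = f"
  unfolding qone_eq_qmonom by (rule ext) (simp add: qmult_torus_qmonom_right qcarrier_iff)

locale quantum_torus =
  fixes q :: "nat \<Rightarrow> nat \<Rightarrow> 'k::field" and n :: nat
  assumes mult_skew: "mult_skew q n"
begin

lemma q_nonzero: "j < i \<Longrightarrow> i < n \<Longrightarrow> q j i \<noteq> 0"
  using mult_skew unfolding mult_skew_def by (meson less_trans)

lemma qcoef_nonzero: "qcoef q n a c \<noteq> 0"
  unfolding qcoef_def using q_nonzero by (auto simp: prod_zero_iff)

lemma qcoef_add_left: "qcoef q n (\<lambda>i. a i + a' i) c = qcoef q n a c * qcoef q n a' c"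
proof -
  have "q j i powi ((a i + a' i) * c j) = q j i powi (a i * c j) * q j i powi (a' i * c j)"
    if "j < i" "i < n" for i j
    using that q_nonzero by (simp add: distrib_right power_int_add)
  then show ?thesis
    unfolding qcoef_def prod.distrib[symmetric] by (intro prod.cong refl) auto
qed

lemma qcoef_add_right: "qcoef q n c (\<lambda>i. a i + a' i) = qcoef q n c a * qcoef q n c a'"
proof -
  have "q j i powi (c i * (a j + a' j)) = q j i powi (c i * a j) * q j i powi (c i * a' j)"
    if "j < i" "i < n" for i j
    using that q_nonzero by (simp add: distrib_left power_int_add)
  then show ?thesis
    unfolding qcoef_def prod.distrib[symmetric] by (intro prod.cong refl) auto
qed

lemma qmult_assoc_qmonom:
  assumes "x \<in> exps n m" "y \<in> exps n m" "z \<in> exps n m"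
  shows "qmult q n (qmult q n (qmonom x) (qmonom y)) (qmonom z)
    = qmult q n (qmonom x) (qmult q n (qmonom y) (qmonom z))"
proof -
  have coef: "qcoef q n (fst x) (fst y) * qcoef q n (fst (exp_add x y)) (fst z)
      = qcoef q n (fst y) (fst z) * qcoef q n (fst x) (fst (exp_add y z))"
    by (simp add: exp_add_def qcoef_add_left qcoef_add_right)
  have closed: "qmonom (exp_add x y) \<in> qcarrier n m" "qmonom (exp_add y z) \<in> qcarrier n m"
    "qmonom x \<in> qcarrier n m" "qmonom z \<in> qcarrier n m"
    using assms by (simp_all add: qmonom_closed exp_add_exps)
  show ?thesis
    unfolding qmult_qmonom_qmonom qmult_qsmult_left[OF closed(1,4)] qmult_qsmult_right[OF closed(2,3)]
    by (simp add: qmult_qmonom_qmonom exp_add_assoc coef)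
qed

lemma qmult_assoc:
  assumes f: "f \<in> qcarrier n m" and g: "g \<in> qcarrier n m" and h: "h \<in> qcarrier n m"
  shows "qmult q n (qmult q n f g) h = qmult q n f (qmult q n g h)"
proof -
  have assoc2: "qmult q n (qmult q n f (qmonom y)) (qmonom z) = qmult q n f (qmult q n (qmonom y) (qmonom z))"
    if "f \<in> qcarrier n m" "y \<in> exps n m" "z \<in> exps n m" for f y z
  proof -
    have y: "qmonom y \<in> qcarrier n m" and z: "qmonom z \<in> qcarrier n m"
      using that by (auto intro: qmonom_closed)
    have "qlinear n m (\<lambda>f. qmult q n (qmult q n f (qmonom y)) (qmonom z))"
      using qlinear_comp[OF qlinear_qmult_right[OF y] qmult_closed[OF _ y] qlinear_qmult_right[OF z]] .
    moreover have "qlinear n m (\<lambda>f. qmult q n f (qmult q n (qmonom y) (qmonom z)))"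
      using qlinear_qmult_right[OF qmult_closed[OF y z]] .
    ultimately show ?thesis
      using qlinear_eqI[OF _ _ _ that(1)] qmult_assoc_qmonom that by blast
  qed
  have assoc1: "qmult q n (qmult q n f g) (qmonom z) = qmult q n f (qmult q n g (qmonom z))"
    if "f \<in> qcarrier n m" "g \<in> qcarrier n m" "z \<in> exps n m" for f g z
  proof -
    have z: "qmonom z \<in> qcarrier n m"
      using that by (auto intro: qmonom_closed)
    have "qlinear n m (\<lambda>g. qmult q n (qmult q n f g) (qmonom z))"
      using qlinear_comp[OF qlinear_qmult_left[OF that(1)] qmult_closed[OF that(1)] qlinear_qmult_right[OF z]] .
    moreover have "qlinear n m (\<lambda>g. qmult q n f (qmult q n g (qmonom z)))"
      using qlinear_comp[OF qlinear_qmult_right[OF z] qmult_closed[OF _ z] qlinear_qmult_left[OF that(1)]] .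
    ultimately show ?thesis
      using qlinear_eqI[OF _ _ _ that(2)] assoc2 that by blast
  qed
  have "qlinear n m (\<lambda>h. qmult q n (qmult q n f g) h)"
    using qlinear_qmult_left[OF qmult_closed[OF f g]] .
  moreover have "qlinear n m (\<lambda>h. qmult q n f (qmult q n g h))"
    using qlinear_comp[OF qlinear_qmult_left[OF g] qmult_closed[OF g] qlinear_qmult_left[OF f]] .
  ultimately show ?thesis
    using qlinear_eqI[OF _ _ _ h] assoc1 f g by blast
qed

end

section \<open>Derivations\<close>

lemma is_qder_closed: "is_qder q n m D \<Longrightarrow> f \<in> qcarrier n m \<Longrightarrow> D f \<in> qcarrier n m"
  by (simp add: is_qder_def)

lemma is_qder_qlinear: "is_qder q n m D \<Longrightarrow> qlinear n m D"
  by (simp add: is_qder_def qlinear_def)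

lemma is_qder_qadd_eq:
  "is_qder q n m D \<Longrightarrow> f \<in> qcarrier n m \<Longrightarrow> g \<in> qcarrier n m \<Longrightarrow> D (qadd f g) = qadd (D f) (D g)"
  by (simp add: is_qder_def)

lemma is_qder_qsmult_eq:
  "is_qder q n m D \<Longrightarrow> f \<in> qcarrier n m \<Longrightarrow> D (qsmult c f) = qsmult c (D f)"
  by (simp add: is_qder_def)

lemma is_qder_qmult_eq:
  "is_qder q n m D \<Longrightarrow> f \<in> qcarrier n m \<Longrightarrow> g \<in> qcarrier n m \<Longrightarrow>
    D (qmult q n f g) = qadd (qmult q n (D f) g) (qmult q n f (D g))"
  by (simp add: is_qder_def)

lemma is_qder_cong:
  assumes "is_qder q n m D'" and "\<forall>f\<in>qcarrier n m. D f = D' f"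
  shows "is_qder q n m D"
  using assms unfolding is_qder_def by (simp add: qadd_closed qsmult_closed qmult_closed)

lemma is_qderI_qmonom:
  assumes closed: "\<And>f. f \<in> qcarrier n m \<Longrightarrow> D f \<in> qcarrier n m" and lin: "qlinear n m D"
    and leibniz: "\<And>x y. x \<in> exps n m \<Longrightarrow> y \<in> exps n m \<Longrightarrow>
       D (qmult q n (qmonom x) (qmonom y))
         = qadd (qmult q n (D (qmonom x)) (qmonom y)) (qmult q n (qmonom x) (D (qmonom y)))"
  shows "is_qder q n m D"
proof -
  have leibniz1: "D (qmult q n f (qmonom y)) = qadd (qmult q n (D f) (qmonom y)) (qmult q n f (D (qmonom y)))"
    if "f \<in> qcarrier n m" "y \<in> exps n m" for f y
  proof -
    have y: "qmonom y \<in> qcarrier n m"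
      using that by (auto intro: qmonom_closed)
    have "qlinear n m (\<lambda>f. D (qmult q n f (qmonom y)))"
      using qlinear_comp[OF qlinear_qmult_right[OF y] qmult_closed[OF _ y] lin] .
    moreover have "qlinear n m (\<lambda>f. qadd (qmult q n (D f) (qmonom y)) (qmult q n f (D (qmonom y))))"
      using qlinear_qadd[OF qlinear_comp[OF lin closed qlinear_qmult_right[OF y]]
          qlinear_qmult_right[OF closed[OF y]]] .
    ultimately show ?thesis
      using qlinear_eqI[OF _ _ _ that(1)] leibniz that by blast
  qed
  have "D (qmult q n f g) = qadd (qmult q n (D f) g) (qmult q n f (D g))"
    if "f \<in> qcarrier n m" "g \<in> qcarrier n m" for f g
  proof -
    have "qlinear n m (\<lambda>g. D (qmult q n f g))"
      using qlinear_comp[OF qlinear_qmult_left[OF that(1)] qmult_closed[OF that(1)] lin] .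
    moreover have "qlinear n m (\<lambda>g. qadd (qmult q n (D f) g) (qmult q n f (D g)))"
      using qlinear_qadd[OF qlinear_qmult_left[OF closed[OF that(1)]]
          qlinear_comp[OF lin closed qlinear_qmult_left[OF that(1)]]] .
    ultimately show ?thesis
      using qlinear_eqI[OF _ _ _ that(2)] leibniz1 that by blast
  qed
  then show ?thesis
    using closed lin by (auto simp: is_qder_def qlinear_def)
qed

lemma is_qder_qadd:
  fixes D1 D2 :: "'k::field qel \<Rightarrow> 'k qel"
  assumes D1: "is_qder q n m D1" and D2: "is_qder q n m D2"
  shows "is_qder q n m (\<lambda>f. qadd (D1 f) (D2 f))"
  unfolding is_qder_def
proof (intro conjI ballI allI)
  fix f :: "'k qel" assume "f \<in> qcarrier n m"
  then show "qadd (D1 f) (D2 f) \<in> qcarrier n m"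
    using is_qder_closed[OF D1] is_qder_closed[OF D2] by (simp add: qadd_closed)
next
  fix f g :: "'k qel" assume "f \<in> qcarrier n m" "g \<in> qcarrier n m"
  then show "qadd (D1 (qadd f g)) (D2 (qadd f g)) = qadd (qadd (D1 f) (D2 f)) (qadd (D1 g) (D2 g))"
    using D1 D2 by (simp add: is_qder_qadd_eq is_qder_qsmult_eq) (simp add: qadd_def fun_eq_iff algebra_simps)
next
  fix c and f :: "'k qel" assume "f \<in> qcarrier n m"
  then show "qadd (D1 (qsmult c f)) (D2 (qsmult c f)) = qsmult c (qadd (D1 f) (D2 f))"
    using D1 D2 by (simp add: is_qder_qadd_eq is_qder_qsmult_eq) (simp add: qadd_def qsmult_def fun_eq_iff algebra_simps)
next
  fix f g :: "'k qel" assume f: "f \<in> qcarrier n m" and g: "g \<in> qcarrier n m"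
  have D: "D1 f \<in> qcarrier n m" "D2 f \<in> qcarrier n m" "D1 g \<in> qcarrier n m" "D2 g \<in> qcarrier n m"
    using f g by (simp_all add: is_qder_closed[OF D1] is_qder_closed[OF D2])
  note qmult_qadd_left[OF D(1,2) g, of q] qmult_qadd_right[OF D(3,4) f, of q]
  then show "qadd (D1 (qmult q n f g)) (D2 (qmult q n f g))
      = qadd (qmult q n (qadd (D1 f) (D2 f)) g) (qmult q n f (qadd (D1 g) (D2 g)))"
    using f g D1 D2 by (simp add: is_qder_qmult_eq) (simp add: qadd_def fun_eq_iff algebra_simps)
qed

lemma is_qder_qsmult:
  fixes D :: "'k::field qel \<Rightarrow> 'k qel"
  assumes D: "is_qder q n m D"
  shows "is_qder q n m (\<lambda>f. qsmult c (D f))"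
  unfolding is_qder_def
proof (intro conjI ballI allI)
  fix f :: "'k qel" assume "f \<in> qcarrier n m"
  then show "qsmult c (D f) \<in> qcarrier n m"
    using is_qder_closed[OF D] by (simp add: qsmult_closed)
next
  fix f g :: "'k qel" assume "f \<in> qcarrier n m" "g \<in> qcarrier n m"
  then show "qsmult c (D (qadd f g)) = qadd (qsmult c (D f)) (qsmult c (D g))"
    using D by (simp add: is_qder_qadd_eq is_qder_qsmult_eq) (simp add: qadd_def qsmult_def fun_eq_iff algebra_simps)
next
  fix c' and f :: "'k qel" assume "f \<in> qcarrier n m"
  then show "qsmult c (D (qsmult c' f)) = qsmult c' (qsmult c (D f))"
    using D by (simp add: is_qder_def mult.commute)
next
  fix f g :: "'k qel" assume f: "f \<in> qcarrier n m" and g: "g \<in> qcarrier n m"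
  have Df: "D f \<in> qcarrier n m" and Dg: "D g \<in> qcarrier n m"
    using f g by (simp_all add: is_qder_closed[OF D])
  note qmult_qsmult_left[OF Df g, of q c] qmult_qsmult_right[OF Dg f, of q c]
  then show "qsmult c (D (qmult q n f g))
      = qadd (qmult q n (qsmult c (D f)) g) (qmult q n f (qsmult c (D g)))"
    using f g D by (simp add: is_qder_qmult_eq) (simp add: qadd_def qsmult_def fun_eq_iff algebra_simps)
qed

lemma is_qder_sum:
  assumes "finite I" "\<And>i. i \<in> I \<Longrightarrow> is_qder q n m (Ds i)"
  shows "is_qder q n m (\<lambda>f x. \<Sum>i\<in>I. Ds i f x)"
  using assms
proof (induction I rule: finite_induct)
  case empty
  have "is_qder q n m (\<lambda>f. qzero)"
    by (simp add: is_qder_def qzero_closed)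
  then show ?case
    by (simp add: qzero_def)
next
  case (insert i I)
  have "(\<lambda>f x. \<Sum>i\<in>insert i I. Ds i f x) = (\<lambda>f. qadd (Ds i f) (\<lambda>x. \<Sum>i\<in>I. Ds i f x))"
    using insert.hyps by (simp add: qadd_def fun_eq_iff)
  then show ?case
    using is_qder_qadd[of q n m "Ds i"] insert by simp
qed

lemma qDT_closed: "f \<in> qcarrier n m \<Longrightarrow> qDT i f \<in> qcarrier n m"
proof -
  have "qsupp (qDT i f) \<subseteq> qsupp f"
    by (auto simp: qsupp_def qDT_def)
  then show "f \<in> qcarrier n m \<Longrightarrow> qDT i f \<in> qcarrier n m"
    by (auto simp: qcarrier_iff intro: finite_subset)
qed

lemma qlinear_qDT: "qlinear n m (qDT i)"
  by (simp add: qlinear_def qDT_def qadd_def qsmult_def fun_eq_iff algebra_simps)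

lemma qDT_qmonom: "qDT i (qmonom x) = qsmult (of_int (fst x i)) (qmonom x)"
  by (auto simp: qDT_def qsmult_def qmonom_def fun_eq_iff)

lemma is_qder_qDT: "is_qder q n m (qDT i)"
proof (rule is_qderI_qmonom[OF qDT_closed qlinear_qDT])
  fix x y assume "x \<in> exps n m" "y \<in> exps n m"
  then have x: "qmonom x \<in> qcarrier n m" and y: "qmonom y \<in> qcarrier n m"
    by (auto intro: qmonom_closed)
  show "qDT i (qmult q n (qmonom x) (qmonom y))
      = qadd (qmult q n (qDT i (qmonom x)) (qmonom y)) (qmult q n (qmonom x) (qDT i (qmonom y)))"
    unfolding qDT_qmonom qmult_qsmult_left[OF x y] qmult_qsmult_right[OF y x] qmult_qmonom_qmonom
    by (auto simp: qDT_def qsmult_def qadd_def qmonom_def fun_eq_iff exp_add_def algebra_simps)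
qed

lemma qDT_qT: "qDT i (qT k) = (if i = k then qT k else qzero)"
proof
  fix x :: qexp
  show "qDT i (qT k) x = (if i = k then qT k else qzero) x"
    by (cases "x = (\<lambda>l. if l = k then 1 else 0, \<lambda>_. 0)") (simp_all add: qDT_def qT_def)
qed

lemma qDT_qX: "qDT i (qX k) = qzero"
  by (auto simp: qDT_def qX_def fun_eq_iff)

lemma qDX_closed: "f \<in> qcarrier n m \<Longrightarrow> qDX j f \<in> qcarrier n m"
proof -
  assume f: "f \<in> qcarrier n m"
  have "qsupp (qDX j f) \<subseteq> (\<lambda>(a, b). (a, b(j := b j - 1))) ` qsupp f"
  proof
    fix x assume "x \<in> qsupp (qDX j f)"
    then obtain a b where "x = (a, b)" and "f (a, b(j := b j + 1)) \<noteq> 0"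
      by (cases x) (auto simp: qsupp_def qDX_def)
    then show "x \<in> (\<lambda>(a, b). (a, b(j := b j - 1))) ` qsupp f"
      by (intro image_eqI[of _ _ "(a, b(j := b j + 1))"]) (auto simp: qsupp_def)
  qed
  moreover have "qsupp (qDX j f) \<subseteq> exps n m"
  proof
    fix x assume "x \<in> qsupp (qDX j f)"
    then obtain a b where x: "x = (a, b)" and "f (a, b(j := b j + 1)) \<noteq> 0"
      by (cases x) (auto simp: qsupp_def qDX_def)
    then have "(a, b(j := b j + 1)) \<in> exps n m"
      using f by (auto simp: qcarrier_iff qsupp_def)
    then show "x \<in> exps n m"
      unfolding x exps_iff by (auto split: if_splits)
  qed
  ultimately show ?thesis
    using f by (auto simp: qcarrier_iff intro: finite_subset)
qed

lemma qlinear_qDX: "qlinear n m (qDX j)"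
  by (simp add: qlinear_def qDX_def qadd_def qsmult_def fun_eq_iff algebra_simps)

lemma fun_upd_Suc_eq_iff:
  fixes b d :: "nat \<Rightarrow> nat"
  shows "d(j := d j + 1) = b \<longleftrightarrow> b j > 0 \<and> d = b(j := b j - 1)"
proof
  assume b: "d(j := d j + 1) = b"
  then have "b j = d j + 1"
    by auto
  with b show "b j > 0 \<and> d = b(j := b j - 1)"
    by (auto simp: fun_eq_iff) (metis fun_upd_other)
next
  assume "b j > 0 \<and> d = b(j := b j - 1)"
  then show "d(j := d j + 1) = b"
    by (auto simp: fun_eq_iff)
qed

lemma qDX_qmonom: "qDX j (qmonom x) = qsmult (of_nat (snd x j)) (qmonom (fst x, (snd x)(j := snd x j - 1)))"
proof
  fix y :: qexp
  obtain a b where x: "x = (a, b)" by (cases x)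
  obtain c d where y: "y = (c, d)" by (cases y)
  have "qDX j (qmonom x) y = (if c = a \<and> d(j := d j + 1) = b then of_nat (d j + 1) else 0)"
    unfolding x y qDX_def qmonom_apply by simp
  also have "\<dots> = (if c = a \<and> b j > 0 \<and> d = b(j := b j - 1) then of_nat (b j) else 0)"
    unfolding fun_upd_Suc_eq_iff by auto
  also have "\<dots> = qsmult (of_nat (snd x j)) (qmonom (fst x, (snd x)(j := snd x j - 1))) y"
    unfolding x y qsmult_def qmonom_apply by auto
  finally show "qDX j (qmonom x) y = qsmult (of_nat (snd x j)) (qmonom (fst x, (snd x)(j := snd x j - 1))) y" .
qed

text \<open>The exponent \<open>b(j := b j - 1)\<close> produced by \<open>\<partial>\<^sub>j\<close> is junk when \<open>b j = 0\<close>; there the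
  coefficient \<open>b j\<close> vanishes, which is all the Leibniz rule on monomials needs.\<close>

lemma qsmult_of_nat_add_qmonom:
  assumes "s > 0 \<Longrightarrow> x1 = x" "t > 0 \<Longrightarrow> x2 = x"
  shows "qsmult c (qsmult (of_nat (s + t)) (qmonom x))
    = qadd (qsmult (of_nat s) (qsmult c (qmonom x1))) (qsmult (of_nat t) (qsmult (c::'k::field) (qmonom x2)))"
  using assms by (cases "s = 0"; cases "t = 0") (auto simp: qsmult_def qadd_def fun_eq_iff algebra_simps)

lemma qDX_qsmult: "qDX j (qsmult c f) = qsmult c (qDX j f)"
  by (simp add: qDX_def qsmult_def fun_eq_iff algebra_simps)

lemma is_qder_qDX: "is_qder q n m (qDX j)"
proof (rule is_qderI_qmonom[OF qDX_closed qlinear_qDX])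
  fix x y assume xy: "x \<in> exps n m" "y \<in> exps n m"
  obtain a b where x: "x = (a, b)" by (cases x)
  obtain a' b' where y: "y = (a', b')" by (cases y)
  have closed: "qmonom x \<in> qcarrier n m" "qmonom y \<in> qcarrier n m"
    "qmonom (fst x, (snd x)(j := snd x j - 1)) \<in> qcarrier n m"
    "qmonom (fst y, (snd y)(j := snd y j - 1)) \<in> qcarrier n m"
    using xy by (auto intro!: qmonom_closed simp: exps_iff)
  have "qsmult (qcoef q n a a') (qsmult (of_nat (b j + b' j))
          (qmonom (\<lambda>i. a i + a' i, (\<lambda>k. b k + b' k)(j := b j + b' j - 1))))
      = qadd (qsmult (of_nat (b j)) (qsmult (qcoef q n a a') (qmonom (\<lambda>i. a i + a' i, \<lambda>k. (b(j := b j - 1)) k + b' k))))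
          (qsmult (of_nat (b' j)) (qsmult (qcoef q n a a') (qmonom (\<lambda>i. a i + a' i, \<lambda>k. b k + (b'(j := b' j - 1)) k))))"
    by (rule qsmult_of_nat_add_qmonom) (auto simp: fun_eq_iff)
  then show "qDX j (qmult q n (qmonom x) (qmonom y))
      = qadd (qmult q n (qDX j (qmonom x)) (qmonom y)) (qmult q n (qmonom x) (qDX j (qmonom y)))"
    unfolding qDX_qmonom qmult_qmonom_qmonom qmult_qsmult_left[OF closed(3,2)]
      qmult_qsmult_right[OF closed(4,1)] qDX_qsmult
    by (simp add: x y exp_add_def)
qed

lemma qDX_qT: "qDX j (qT k) = qzero"
  by (auto simp: qDX_def qT_def fun_eq_iff)

lemma qDX_qX: "qDX j (qX k) = (if j = k then qone else qzero)"
  by (auto simp: qDX_def qX_def qone_def fun_eq_iff)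

context quantum_torus
begin

lemma is_qder_qad:
  assumes u: "u \<in> qcarrier n m"
  shows "is_qder q n m (qad q n u)"
  unfolding is_qder_def
proof (intro conjI ballI allI)
  fix f :: "'k qel" assume "f \<in> qcarrier n m"
  with u show "qad q n u f \<in> qcarrier n m"
    unfolding qad_def by (intro qdiff_closed qmult_closed)
next
  fix f g :: "'k qel" assume "f \<in> qcarrier n m" "g \<in> qcarrier n m"
  with u show "qad q n u (qadd f g) = qadd (qad q n u f) (qad q n u g)"
    unfolding qad_def by (simp add: qmult_qadd_left qmult_qadd_right) (simp add: qadd_def fun_eq_iff)
next
  fix c and f :: "'k qel" assume "f \<in> qcarrier n m"
  with u show "qad q n u (qsmult c f) = qsmult c (qad q n u f)"
    unfolding qad_def
    by (simp add: qmult_qsmult_left qmult_qsmult_right) (simp add: qsmult_def fun_eq_iff algebra_simps)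
next
  fix f g :: "'k qel" assume f: "f \<in> qcarrier n m" and g: "g \<in> qcarrier n m"
  have closed: "qmult q n u f \<in> qcarrier n m" "qmult q n f u \<in> qcarrier n m"
    "qmult q n u g \<in> qcarrier n m" "qmult q n g u \<in> qcarrier n m"
    using u f g by (auto intro: qmult_closed)
  show "qad q n u (qmult q n f g) = qadd (qmult q n (qad q n u f) g) (qmult q n f (qad q n u g))"
    unfolding qad_def qmult_qdiff_left[OF closed(1,2) g] qmult_qdiff_right[OF closed(3,4) f]
      qmult_assoc[OF u f g] qmult_assoc[OF f u g] qmult_assoc[OF f g u]
    by (simp add: qadd_def fun_eq_iff)
qed

lemma is_qder_central_qmult:
  assumes z: "z \<in> qcenter q n m" and D: "is_qder q n m D"
  shows "is_qder q n m (\<lambda>f. qmult q n z (D f))"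
  unfolding is_qder_def
proof (intro conjI ballI allI)
  have zc: "z \<in> qcarrier n m" and zf: "\<And>f. f \<in> qcarrier n m \<Longrightarrow> qmult q n z f = qmult q n f z"
    using z by (auto simp: qcenter_def)
  note Dc = is_qder_closed[OF D]
  {
    fix f :: "'k qel" assume "f \<in> qcarrier n m"
    then show "qmult q n z (D f) \<in> qcarrier n m"
      using zc Dc by (intro qmult_closed)
  next
    fix f g :: "'k qel" assume f: "f \<in> qcarrier n m" and g: "g \<in> qcarrier n m"
    show "qmult q n z (D (qadd f g)) = qadd (qmult q n z (D f)) (qmult q n z (D g))"
      using f g by (simp add: is_qder_qadd_eq[OF D] qmult_qadd_right[OF Dc[OF f] Dc[OF g] zc])
  next
    fix c and f :: "'k qel" assume f: "f \<in> qcarrier n m"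
    show "qmult q n z (D (qsmult c f)) = qsmult c (qmult q n z (D f))"
      using f by (simp add: is_qder_qsmult_eq[OF D] qmult_qsmult_right[OF Dc[OF f] zc])
  next
    fix f g :: "'k qel" assume f: "f \<in> qcarrier n m" and g: "g \<in> qcarrier n m"
    have "qmult q n z (D (qmult q n f g)) = qmult q n z (qadd (qmult q n (D f) g) (qmult q n f (D g)))"
      using f g by (simp add: is_qder_qmult_eq[OF D])
    also have "\<dots> = qadd (qmult q n z (qmult q n (D f) g)) (qmult q n z (qmult q n f (D g)))"
      using f g Dc zc by (intro qmult_qadd_right) (auto intro: qmult_closed)
    also have "qmult q n z (qmult q n f (D g)) = qmult q n f (qmult q n z (D g))"
      using f g Dc zc zf[OF f] by (metis qmult_assoc)
    also have "qmult q n z (qmult q n (D f) g) = qmult q n (qmult q n z (D f)) g"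
      using f g Dc zc by (simp add: qmult_assoc)
    finally show "qmult q n z (D (qmult q n f g))
        = qadd (qmult q n (qmult q n z (D f)) g) (qmult q n f (qmult q n z (D g)))" .
  }
qed

lemma is_qder_qcomb:
  assumes u: "u \<in> qcarrier n m" and z: "\<forall>i<n. z i \<in> qcenter q n m" and w: "\<forall>j<m. w j \<in> qcenter q n m"
  shows "is_qder q n m (qcomb q n m u z w)"
proof -
  have "is_qder q n m (\<lambda>f. qadd (qadd (qad q n u f) (\<lambda>x. \<Sum>i<n. qmult q n (z i) (qDT i f) x))
      (\<lambda>x. \<Sum>j<m. qmult q n (w j) (qDX j f) x))"
    using z w
    by (intro is_qder_qadd is_qder_qad u is_qder_sum finite_lessThan is_qder_central_qmult
        is_qder_qDT is_qder_qDX) auto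
  moreover have "qcomb q n m u z w = (\<lambda>f. qadd (qadd (qad q n u f) (\<lambda>x. \<Sum>i<n. qmult q n (z i) (qDT i f) x))
      (\<lambda>x. \<Sum>j<m. qmult q n (w j) (qDX j f) x))"
    by (simp add: qcomb_def qadd_def fun_eq_iff)
  ultimately show ?thesis
    by simp
qed

end

section \<open>Derivations vanishing on the generators\<close>

definition expT :: "nat \<Rightarrow> nat \<Rightarrow> int" where
  "expT k = (\<lambda>i. if i = k then 1 else 0)"

definition expX :: "nat \<Rightarrow> nat \<Rightarrow> nat" where
  "expX k = (\<lambda>j. if j = k then 1 else 0)"

lemma qT_eq_qmonom: "qT k = qmonom (expT k, \<lambda>_. 0)"
  by (simp add: qT_def qmonom_def expT_def fun_eq_iff)

lemma qX_eq_qmonom: "qX k = qmonom (\<lambda>_. 0, expX k)"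
  by (simp add: qX_def qmonom_def expX_def fun_eq_iff)

lemma qmult_qT_left:
  "finite (qsupp g) \<Longrightarrow> qmult q n (qT k) g c
    = qcoef q n (expT k) (\<lambda>i. fst c i - expT k i) * g (\<lambda>i. fst c i - expT k i, snd c)"
  unfolding qT_eq_qmonom by (rule qmult_torus_qmonom_left)

lemma qmult_qT_right:
  "finite (qsupp g) \<Longrightarrow> qmult q n g (qT k) c
    = qcoef q n (\<lambda>i. fst c i - expT k i) (expT k) * g (\<lambda>i. fst c i - expT k i, snd c)"
  unfolding qT_eq_qmonom by (rule qmult_torus_qmonom_right)

lemma qT_closed: "k < n \<Longrightarrow> qT k \<in> qcarrier n m"
  unfolding qT_eq_qmonom by (rule qmonom_closed) (simp add: exps_iff expT_def)

lemma qT_inverse_closed: "k < n \<Longrightarrow> qmonom (\<lambda>i. - expT k i, \<lambda>_. 0) \<in> qcarrier n m"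
  by (rule qmonom_closed) (simp add: exps_iff expT_def)

lemma qX_closed: "k < m \<Longrightarrow> qX k \<in> qcarrier n m"
  unfolding qX_eq_qmonom by (rule qmonom_closed) (simp add: exps_iff expX_def)

definition exp_degree :: "nat \<Rightarrow> nat \<Rightarrow> qexp \<Rightarrow> nat" where
  "exp_degree n m x = (\<Sum>i<n. nat \<bar>fst x i\<bar>) + (\<Sum>j<m. snd x j)"

lemma sum_lessThan_fun_upd:
  fixes h :: "'a \<Rightarrow> 'b::comm_monoid_add" and i n :: nat
  assumes "i < n"
  shows "(\<Sum>l<n. h ((a(i := v)) l)) + h (a i) = (\<Sum>l<n. h (a l)) + h v"
proof -
  have "(\<Sum>l<n. h ((a(i := v)) l)) = h v + (\<Sum>l\<in>{..<n} - {i}. h ((a(i := v)) l))"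
    using assms sum.remove[OF finite_lessThan, of i n "\<lambda>l. h ((a(i := v)) l)"] by simp
  also have "(\<Sum>l\<in>{..<n} - {i}. h ((a(i := v)) l)) = (\<Sum>l\<in>{..<n} - {i}. h (a l))"
    by (intro sum.cong) auto
  finally show ?thesis
    using assms sum.remove[OF finite_lessThan, of i n "\<lambda>l. h (a l)"] by (simp add: ac_simps)
qed

lemma exp_degree_upd_fst_less:
  assumes "i < n" "nat \<bar>v\<bar> < nat \<bar>a i\<bar>"
  shows "exp_degree n m (a(i := v), b) < exp_degree n m (a, b)"
proof -
  have "(\<Sum>l<n. nat \<bar>(a(i := v)) l\<bar>) + nat \<bar>a i\<bar> = (\<Sum>l<n. nat \<bar>a l\<bar>) + nat \<bar>v\<bar>"
    by (rule sum_lessThan_fun_upd[OF assms(1)])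
  with assms(2) show ?thesis
    unfolding exp_degree_def fst_conv snd_conv by linarith
qed

lemma exp_degree_upd_snd_less:
  assumes "j < m" "v < b j"
  shows "exp_degree n m (a, b(j := v)) < exp_degree n m (a, b)"
  using sum_lessThan_fun_upd[OF assms(1), where h = "\<lambda>v. v" and a = b and v = v] assms(2)
  by (simp add: exp_degree_def)

lemma (in quantum_torus) qmonom_eq_qmult_generator:
  assumes x: "x \<in> exps n m" "x \<noteq> (\<lambda>_. 0, \<lambda>_. 0)"
  obtains x' g c where "x' \<in> exps n m" "exp_degree n m x' < exp_degree n m x" "c \<noteq> 0"
    "qmult q n (qmonom x') g = qsmult c (qmonom x)"
    "(\<exists>j<m. g = qX j) \<or> (\<exists>i<n. g = qT i) \<or> (\<exists>i<n. g = qmonom (\<lambda>l. - expT i l, \<lambda>_. 0))"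
proof -
  obtain a b where ab: "x = (a, b)"
    by (cases x)
  have "(\<exists>j<m. b j > 0) \<or> (\<exists>i<n. a i \<noteq> 0)"
  proof (rule ccontr)
    assume none: "\<not> ?thesis"
    have "a i = 0" for i
      using none x(1) by (cases "i < n") (auto simp: ab exps_iff)
    moreover have "b j = 0" for j
      using none x(1) by (cases "j < m") (auto simp: ab exps_iff)
    ultimately show False
      using x(2) by (auto simp: ab fun_eq_iff)
  qed
  then consider (X) j where "j < m" "b j > 0" | (T) i where "i < n" "a i > 0"
    | (T_inv) i where "i < n" "a i < 0"
    by (meson linorder_neqE)
  then show ?thesis
  proof cases
    case X
    let ?x' = "(a, b(j := b j - 1))"
    have prod: "qmult q n (qmonom ?x') (qX j) = qsmult 1 (qmonom x)"
      using X unfolding qX_eq_qmonom qmult_qmonom_qmonom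
      by (simp add: ab exp_add_def expX_def qsmult_def qmonom_def fun_eq_iff)
    have deg: "exp_degree n m ?x' < exp_degree n m x"
      using X unfolding ab by (intro exp_degree_upd_snd_less) auto
    show ?thesis
      by (rule that[of ?x' 1 "qX j"]) (use X x(1) prod deg in \<open>auto simp: ab exps_iff\<close>)
  next
    case T
    let ?x' = "(a(i := a i - 1), b)"
    have "(\<lambda>l. (a(i := a i - 1)) l + expT i l) = a"
      by (auto simp: expT_def fun_eq_iff)
    then have prod: "qmult q n (qmonom ?x') (qT i) = qsmult (qcoef q n (a(i := a i - 1)) (expT i)) (qmonom x)"
      unfolding qT_eq_qmonom qmult_qmonom_qmonom by (simp add: ab exp_add_def)
    have deg: "exp_degree n m ?x' < exp_degree n m x"
      using T unfolding ab by (intro exp_degree_upd_fst_less) auto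
    show ?thesis
      by (rule that[OF _ deg qcoef_nonzero prod]) (use T x(1) in \<open>auto simp: ab exps_iff\<close>)
  next
    case T_inv
    let ?x' = "(a(i := a i + 1), b)"
    have "(\<lambda>l. (a(i := a i + 1)) l + - expT i l) = a"
      by (auto simp: expT_def fun_eq_iff)
    then have prod: "qmult q n (qmonom ?x') (qmonom (\<lambda>l. - expT i l, \<lambda>_. 0))
        = qsmult (qcoef q n (a(i := a i + 1)) (\<lambda>l. - expT i l)) (qmonom x)"
      unfolding qmult_qmonom_qmonom by (simp add: ab exp_add_def)
    have deg: "exp_degree n m ?x' < exp_degree n m x"
      using T_inv unfolding ab by (intro exp_degree_upd_fst_less) auto
    show ?thesis
      by (rule that[OF _ deg qcoef_nonzero prod]) (use T_inv x(1) in \<open>auto simp: ab exps_iff\<close>)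
  qed
qed

context quantum_torus
begin

lemma is_qder_qone: "is_qder q n m D \<Longrightarrow> D qone = qzero"
proof -
  assume D: "is_qder q n m D"
  have "D qone = D (qmult q n qone qone)"
    by (simp add: qmult_qone_left[OF qone_closed[of n m]])
  also have "\<dots> = qadd (D qone) (D qone)"
    using is_qder_qmult_eq[OF D qone_closed qone_closed] is_qder_closed[OF D qone_closed]
    by (simp add: qmult_qone_left qmult_qone_right)
  finally have "D qone x = D qone x + D qone x" for x
    by (metis qadd_def)
  then show ?thesis
    unfolding qzero_def by (intro ext) (metis add_cancel_right_right)
qed

lemma is_qder_torus_inverse_eq_qzero:
  assumes D: "is_qder q n m D" and k: "k < n" and DT: "D (qT k) = qzero"
  shows "D (qmonom (\<lambda>i. - expT k i, \<lambda>_. 0)) = qzero"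
proof -
  let ?Tinv = "qmonom (\<lambda>i. - expT k i, \<lambda>_. 0) :: 'k qel"
  note T = qT_closed[OF k] and Tinv = qT_inverse_closed[OF k]
  have DTinv: "D ?Tinv \<in> qcarrier n m"
    by (rule is_qder_closed[OF D Tinv])
  have "qmult q n (qT k) ?Tinv = qsmult (qcoef q n (expT k) (\<lambda>i. - expT k i)) qone"
    "qmult q n ?Tinv (qT k) = qsmult (qcoef q n (\<lambda>i. - expT k i) (expT k)) qone"
    unfolding qT_eq_qmonom qmult_qmonom_qmonom qone_eq_qmonom by (simp_all add: exp_add_def)
  note inverse = this
  have "qmult q n (qT k) (D ?Tinv) = D (qmult q n (qT k) ?Tinv)"
    using is_qder_qmult_eq[OF D T Tinv] DT by simp
  also have "\<dots> = qzero"
    unfolding inverse(1) is_qder_qsmult_eq[OF D qone_closed] is_qder_qone[OF D] by simp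
  finally have "qmult q n ?Tinv (qmult q n (qT k) (D ?Tinv)) = qzero"
    by simp
  then have "qsmult (qcoef q n (\<lambda>i. - expT k i) (expT k)) (D ?Tinv) = qzero"
    unfolding qmult_assoc[OF Tinv T DTinv, symmetric] inverse(2)
      qmult_qsmult_left[OF qone_closed DTinv] qmult_qone_left[OF DTinv] .
  then show ?thesis
    by (simp add: qsmult_eq_qzero_iff qcoef_nonzero)
qed

lemma is_qder_eq_qzeroI:
  assumes D: "is_qder q n m D" and DT: "\<And>k. k < n \<Longrightarrow> D (qT k) = qzero"
    and DX: "\<And>j. j < m \<Longrightarrow> D (qX j) = qzero" and f: "f \<in> qcarrier n m"
  shows "D f = qzero"
proof -
  have "D (qmonom x) = qzero" if "x \<in> exps n m" for x
    using that
  proof (induction "exp_degree n m x" arbitrary: x rule: less_induct)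
    case less
    show ?case
    proof (cases "x = (\<lambda>_. 0, \<lambda>_. 0)")
      case True
      then show ?thesis
        using is_qder_qone[OF D] by (simp add: qone_eq_qmonom)
    next
      case False
      obtain x' g c where x': "x' \<in> exps n m" "exp_degree n m x' < exp_degree n m x"
        and c: "c \<noteq> 0" and prod: "qmult q n (qmonom x') g = qsmult c (qmonom x)"
        and gen: "(\<exists>j<m. g = qX j) \<or> (\<exists>i<n. g = qT i) \<or> (\<exists>i<n. g = qmonom (\<lambda>l. - expT i l, \<lambda>_. 0))"
        by (rule qmonom_eq_qmult_generator[OF less.prems False])
      from gen have g: "g \<in> qcarrier n m \<and> D g = qzero"
        by (elim disjE exE conjE) (simp_all add: DX DT qX_closed qT_closed qT_inverse_closed
            is_qder_torus_inverse_eq_qzero[OF D _ DT])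
      have "qsmult c (D (qmonom x)) = D (qmult q n (qmonom x') g)"
        unfolding prod using is_qder_qsmult_eq[OF D qmonom_closed[OF less.prems]] by simp
      also have "\<dots> = qzero"
        using is_qder_qmult_eq[OF D qmonom_closed[OF x'(1)]] less.hyps[OF x'(2,1)] g by simp
      finally show ?thesis
        using c by (simp add: qsmult_eq_qzero_iff)
    qed
  qed
  moreover have "qlinear n m (\<lambda>f. qzero :: 'k qel)"
    by (simp add: qlinear_def)
  ultimately show ?thesis
    by (intro qlinear_eqI[OF is_qder_qlinear[OF D] _ _ f])
qed

end

section \<open>The centre\<close>

lemma polyX_qmult_commute:
  assumes z: "z \<in> polyX n m" and f: "f \<in> qcarrier n m"
  shows "qmult q n z f = qmult q n f z"
proof
  fix c
  have z0: "\<And>x. x \<in> qsupp z \<Longrightarrow> fst x = (\<lambda>_. 0)"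
    using z by (auto simp: polyX_def qsupp_def)
  have "qmult q n z f c = (\<Sum>x\<in>qsupp z. \<Sum>y\<in>qsupp f. if c = exp_add x y then z x * f y else 0)"
    unfolding qmult_eq_sum_qsupp by (intro sum.cong refl) (simp add: z0)
  also have "\<dots> = (\<Sum>y\<in>qsupp f. \<Sum>x\<in>qsupp z. if c = exp_add y x then f y * z x else 0)"
    by (subst sum.swap) (intro sum.cong refl; metis exp_add_commute mult.commute)
  also have "\<dots> = qmult q n f z c"
    unfolding qmult_eq_sum_qsupp by (intro sum.cong refl) (simp add: z0)
  finally show "qmult q n z f c = qmult q n f z c" .
qed

lemma polyX_subset_qcenter: "polyX n m \<subseteq> (qcenter q n m :: 'k::field qel set)"
proof
  fix z :: "'k qel" assume z: "z \<in> polyX n m"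
  then have "z \<in> qcarrier n m"
    by (simp add: polyX_def)
  with z show "z \<in> qcenter q n m"
    using polyX_qmult_commute[OF z] by (simp add: qcenter_def)
qed

lemma qX_polyX: "j < m \<Longrightarrow> qX j \<in> polyX n m"
  using qX_closed[of j m n] by (auto simp: polyX_def qX_def)

context quantum_torus
begin

lemma torus_qmonom_qcenter:
  assumes a: "\<forall>i. n \<le> i \<longrightarrow> a i = 0"
    and commute: "\<forall>k<n. qcoef q n a (expT k) = qcoef q n (expT k) a"
  shows "qmonom (a, \<lambda>_. 0) \<in> qcenter q n m"
proof -
  let ?Ta = "qmonom (a, \<lambda>_. 0) :: 'k qel"
  have Ta: "?Ta \<in> qcarrier n m"
    using a by (simp add: qmonom_closed exps_iff)
  have "qad q n ?Ta f = qzero" if "f \<in> qcarrier n m" for f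
  proof (rule is_qder_eq_qzeroI[OF is_qder_qad[OF Ta] _ _ that])
    fix k assume "k < n"
    then show "qad q n ?Ta (qT k) = qzero"
      using commute unfolding qad_def qT_eq_qmonom qmult_qmonom_qmonom
      by (simp add: exp_add_commute qsmult_def fun_eq_iff)
  next
    fix j assume "j < m"
    then show "qad q n ?Ta (qX j) = qzero"
      using polyX_qmult_commute[OF qX_polyX Ta] by (simp add: qad_def fun_eq_iff)
  qed
  then show ?thesis
    using Ta by (auto simp: qcenter_def qad_def fun_eq_iff)
qed

lemma qcenter_principal_qideal:
  assumes P: "P \<in> qcenter q n m"
  shows "qideal q n m ((\<lambda>g. qmult q n P g) ` qcarrier n m)"
  unfolding qideal_def
proof (intro conjI ballI)
  have Pc: "P \<in> qcarrier n m" and Pcomm: "\<And>f. f \<in> qcarrier n m \<Longrightarrow> qmult q n P f = qmult q n f P"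
    using P by (auto simp: qcenter_def)
  let ?I = "(\<lambda>g. qmult q n P g) ` qcarrier n m"
  show "?I \<subseteq> qcarrier n m"
    using Pc by (auto intro: qmult_closed)
  show "qzero \<in> ?I"
    using qzero_closed by (intro image_eqI[of _ _ qzero]) simp_all
  {
    fix f g :: "'k qel" assume "f \<in> ?I" "g \<in> ?I"
    then obtain f' g' where f': "f' \<in> qcarrier n m" "f = qmult q n P f'"
      and g': "g' \<in> qcarrier n m" "g = qmult q n P g'"
      by blast
    then have "qadd f g = qmult q n P (qadd f' g')"
      using qmult_qadd_right[OF f'(1) g'(1) Pc] by simp
    then show "qadd f g \<in> ?I"
      using f'(1) g'(1) by (auto intro: qadd_closed)
  next
    fix f g :: "'k qel" assume f: "f \<in> qcarrier n m" and "g \<in> ?I"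
    then obtain g' where g': "g' \<in> qcarrier n m" "g = qmult q n P g'"
      by blast
    have "qmult q n f g = qmult q n P (qmult q n f g')"
      unfolding g'(2) qmult_assoc[OF f Pc g'(1), symmetric] Pcomm[OF f, symmetric]
        qmult_assoc[OF Pc f g'(1)] ..
    moreover have "qmult q n g f = qmult q n P (qmult q n g' f)"
      unfolding g'(2) qmult_assoc[OF Pc g'(1) f] ..
    ultimately show "qmult q n f g \<in> ?I" "qmult q n g f \<in> ?I"
      using f g'(1) by (auto intro: qmult_closed)
  }
qed

lemma qtorus_simple_central_right_invertible:
  assumes simple: "qtorus_simple q n" and P: "P \<in> qcenter q n 0" and P0: "P \<noteq> qzero"
  obtains g where "g \<in> qcarrier n 0" "qmult q n P g = qone"
proof -
  let ?I = "(\<lambda>g. qmult q n P g) ` qcarrier n 0"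
  have "?I = {qzero} \<or> ?I = qcarrier n 0"
    using simple qcenter_principal_qideal[OF P] by (simp add: qtorus_simple_def)
  moreover have "P \<in> qcarrier n 0"
    using P by (simp add: qcenter_def)
  then have "P \<in> ?I"
    using qone_closed by (intro image_eqI[of _ _ qone]) (simp_all add: qmult_qone_right)
  ultimately have "qone \<in> ?I"
    using P0 qone_closed by auto
  then show ?thesis
    using that by force
qed

lemma qmult_torus_qmonom_minus_qone:
  assumes "(a, \<lambda>_. 0) \<in> exps n m" and g: "g \<in> qcarrier n m"
  shows "qmult q n (\<lambda>x. qmonom (a, \<lambda>_. 0) x - qone x) g c
    = qcoef q n a (\<lambda>i. fst c i - a i) * g (\<lambda>i. fst c i - a i, snd c) - g c"
  using qmult_qdiff_left[OF qmonom_closed[OF assms(1)] qone_closed g] g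
  by (simp add: qmult_qone_left[OF g] qmult_torus_qmonom_left qcarrier_iff)

text \<open>With \<open>l(y) = a\<^sub>i y\<^sub>i\<close> for some \<open>a\<^sub>i \<noteq> 0\<close>: if \<open>(T\<^sup>a - 1) g = 1\<close>, the point of the support
  of \<open>g\<close> maximising \<open>l\<close> is \<open>-a\<close> and the one minimising \<open>l\<close> is \<open>0\<close>, so \<open>max l < 0 = min l\<close>.\<close>

lemma torus_qmonom_minus_qone_not_right_invertible:
  assumes a: "(a, \<lambda>_. 0) \<in> exps n m" "a \<noteq> (\<lambda>_. 0)" and g: "g \<in> qcarrier n m"
  shows "qmult q n (\<lambda>x. qmonom (a, \<lambda>_. 0) x - qone x) g \<noteq> qone"
proof
  assume Pg: "qmult q n (\<lambda>x. qmonom (a, \<lambda>_. 0) x - qone x) g = qone"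
  have fin: "finite (qsupp g)"
    using g by (simp add: qcarrier_iff)
  note Pg_apply = qmult_torus_qmonom_minus_qone[OF a(1) g]
  have "g \<noteq> qzero"
  proof
    assume "g = qzero"
    then show False
      using Pg by (metis qmult_qzero_right qone_def qzero_def zero_neq_one)
  qed
  then have supp: "finite (qsupp g)" "qsupp g \<noteq> {}"
    using fin by (auto simp: qzero_iff_qsupp_empty)
  obtain i where ai: "a i \<noteq> 0"
    using a(2) by auto
  then have sq: "a i * a i > 0"
    by (simp add: zero_less_mult_iff linorder_neq_iff) blast
  define l where "l y = a i * fst y i" for y :: qexp
  define M where "M = Max (l ` qsupp g)"
  define M' where "M' = Min (l ` qsupp g)"
  have "M \<in> l ` qsupp g" "M' \<in> l ` qsupp g"
    using supp by (simp_all add: M_def M'_def)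
  then obtain x0 x1 where x0: "x0 \<in> qsupp g" "l x0 = M" and x1: "x1 \<in> qsupp g" "l x1 = M'"
    by (metis imageE)
  have le_M: "l y \<le> M" and ge_M': "M' \<le> l y" if "y \<in> qsupp g" for y
    using that supp by (simp_all add: M_def M'_def)
  define c0 where "c0 = (\<lambda>k. fst x0 k + a k, snd x0)"
  have "l c0 = M + a i * a i"
    using x0(2) by (simp add: l_def c0_def algebra_simps)
  then have "g c0 = 0"
    using le_M[of c0] sq by (auto simp: qsupp_def)
  then have "qmult q n (\<lambda>x. qmonom (a, \<lambda>_. 0) x - qone x) g c0 \<noteq> 0"
    unfolding Pg_apply using x0(1) qcoef_nonzero by (simp add: qsupp_def c0_def)
  then have "c0 = (\<lambda>_. 0, \<lambda>_. 0)"
    unfolding Pg by (simp add: qone_def split: if_splits)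
  then have "l c0 = 0"
    by (simp add: l_def)
  define c1 where "c1 = (\<lambda>k. fst x1 k - a k, snd x1)"
  have "l c1 = M' - a i * a i"
    using x1(2) by (simp add: l_def c1_def algebra_simps)
  then have "g c1 = 0"
    using ge_M'[of c1] sq by (auto simp: qsupp_def)
  then have "qmult q n (\<lambda>x. qmonom (a, \<lambda>_. 0) x - qone x) g x1 \<noteq> 0"
    unfolding Pg_apply using x1(1) by (simp add: qsupp_def c1_def)
  then have "x1 = (\<lambda>_. 0, \<lambda>_. 0)"
    unfolding Pg by (simp add: qone_def split: if_splits)
  then have "M' = 0"
    using x1(2) by (simp add: l_def)
  moreover have "M' \<le> M"
    using ge_M'[OF x0(1)] x0(2) by simp
  ultimately show False
    using \<open>l c0 = 0\<close> \<open>l c0 = M + a i * a i\<close> sq by linarith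
qed

lemma qtorus_simple_commuting_exp_eq_0:
  assumes simple: "qtorus_simple q n" and a: "\<forall>i. n \<le> i \<longrightarrow> a i = 0"
    and commute: "\<forall>k<n. qcoef q n a (expT k) = qcoef q n (expT k) a"
  shows "a = (\<lambda>_. 0)"
proof (rule ccontr)
  assume a0: "a \<noteq> (\<lambda>_. 0)"
  let ?Ta = "qmonom (a, \<lambda>_. 0) :: 'k qel"
  let ?P = "\<lambda>x. ?Ta x - qone x"
  have ae: "(a, \<lambda>_. 0) \<in> exps n 0"
    using a by (simp add: exps_iff)
  have Ta: "?Ta \<in> qcenter q n 0"
    by (rule torus_qmonom_qcenter[OF a commute])
  have one: "qone \<in> qcenter q n 0"
    using polyX_subset_qcenter qone_closed by (fastforce simp: polyX_def qone_def)
  have "?P \<in> qcenter q n 0"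
    using Ta one
    by (auto simp: qcenter_def qdiff_closed qmult_qdiff_left qmult_qdiff_right)
  moreover have "?P \<noteq> qzero"
  proof
    assume P0: "?P = qzero"
    have "?P (a, \<lambda>_. 0) = 0"
      using fun_cong[OF P0, of "(a, \<lambda>_. 0)"] by (simp only: qzero_apply)
    then show False
      using a0 by (simp add: qmonom_def qone_def)
  qed
  ultimately obtain g where "g \<in> qcarrier n 0" "qmult q n ?P g = qone"
    using qtorus_simple_central_right_invertible[OF simple] by blast
  then show False
    using torus_qmonom_minus_qone_not_right_invertible[OF ae a0] by blast
qed

lemma qcenter_subset_polyX:
  assumes simple: "qtorus_simple q n"
  shows "qcenter q n m \<subseteq> polyX n m"
proof
  fix z assume z: "z \<in> qcenter q n m"
  then have zc: "z \<in> qcarrier n m" and zf: "\<And>f. f \<in> qcarrier n m \<Longrightarrow> qmult q n z f = qmult q n f z"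
    by (auto simp: qcenter_def)
  have fin: "finite (qsupp z)"
    using zc by (simp add: qcarrier_iff)
  have "a = (\<lambda>_. 0)" if "z (a, b) \<noteq> 0" for a b
  proof (rule qtorus_simple_commuting_exp_eq_0[OF simple])
    show "\<forall>i. n \<le> i \<longrightarrow> a i = 0"
      using zc that by (auto simp: qcarrier_iff qsupp_def exps_iff)
    show "\<forall>k<n. qcoef q n a (expT k) = qcoef q n (expT k) a"
    proof (intro allI impI)
      fix k assume k: "k < n"
      have shift: "(\<lambda>i. a i + expT k i - expT k i) = a"
        by simp
      have "qmult q n z (qT k) (\<lambda>i. a i + expT k i, b) = qmult q n (qT k) z (\<lambda>i. a i + expT k i, b)"
        using zf[OF qT_closed[OF k]] by simp
      then have "qcoef q n a (expT k) * z (a, b) = qcoef q n (expT k) a * z (a, b)"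
        unfolding qT_eq_qmonom qmult_torus_qmonom_right[OF fin] qmult_torus_qmonom_left[OF fin]
        by (simp add: shift)
      then show "qcoef q n a (expT k) = qcoef q n (expT k) a"
        using that by simp
    qed
  qed
  then show "z \<in> polyX n m"
    using zc by (auto simp: polyX_def)
qed

lemma qcenter_eq_polyX: "qtorus_simple q n \<Longrightarrow> qcenter q n m = polyX n m"
  using qcenter_subset_polyX polyX_subset_qcenter by blast

end

section \<open>Decomposition of derivations\<close>

definition qder_coeff :: "(('k::field) qel \<Rightarrow> 'k qel) \<Rightarrow> nat \<Rightarrow> qexp \<Rightarrow> 'k" where
  "qder_coeff D i x = D (qT i) (\<lambda>l. fst x l + expT i l, snd x)"

lemma qder_coeff_closed:
  assumes i: "i < n" and D: "D (qT i) \<in> qcarrier n m"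
  shows "qder_coeff D i \<in> qcarrier n m"
proof -
  let ?shift = "\<lambda>y :: qexp. (\<lambda>l. fst y l - expT i l, snd y)"
  have "qsupp (qder_coeff D i) \<subseteq> ?shift ` qsupp (D (qT i))"
  proof
    fix x assume "x \<in> qsupp (qder_coeff D i)"
    then show "x \<in> ?shift ` qsupp (D (qT i))"
      by (intro image_eqI[of _ _ "(\<lambda>l. fst x l + expT i l, snd x)"]) (auto simp: qder_coeff_def qsupp_def)
  qed
  moreover have "?shift ` qsupp (D (qT i)) \<subseteq> exps n m"
    using D i by (auto simp: qcarrier_iff exps_iff expT_def)
  ultimately show ?thesis
    using D by (auto simp: qcarrier_iff intro: finite_subset)
qed

context quantum_torus
begin

definition commutator_coeff :: "nat \<Rightarrow> (nat \<Rightarrow> int) \<Rightarrow> 'k" where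
  "commutator_coeff i a = qcoef q n a (expT i) - qcoef q n (expT i) a"

lemma commutator_coeff_zero [simp]: "commutator_coeff i (\<lambda>_. 0) = 0"
  by (simp add: commutator_coeff_def)

text \<open>Apply \<open>D\<close> to the commutation relation of \<open>T\<^sub>i\<close> and \<open>T\<^sub>j\<close> and compare the coefficients
  of \<open>T\<^sup>a\<^sup>+\<^sup>e\<^sup>i\<^sup>+\<^sup>e\<^sup>j X\<^sup>b\<close>.\<close>

lemma qder_coeff_cross_relation:
  assumes D: "is_qder q n m D" and i: "i < n" and j: "j < n"
  shows "qder_coeff D j x * commutator_coeff i (fst x) = qder_coeff D i x * commutator_coeff j (fst x)"
proof -
  obtain a b where x: "x = (a, b)"
    by (cases x)
  note Ti = qT_closed[OF i] and Tj = qT_closed[OF j]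
  have fi: "finite (qsupp (D (qT i)))" and fj: "finite (qsupp (D (qT j)))"
    using is_qder_closed[OF D Ti] is_qder_closed[OF D Tj] by (auto simp: qcarrier_iff)
  let ?Q1 = "qcoef q n (expT i) (expT j)" and ?Q2 = "qcoef q n (expT j) (expT i)"
  have "qsmult ?Q1 (qmult q n (qT j) (qT i)) = qsmult ?Q2 (qmult q n (qT i) (qT j))"
    unfolding qT_eq_qmonom qmult_qmonom_qmonom qsmult_qsmult fst_conv
    by (simp add: exp_add_commute[of "(expT i, \<lambda>_. 0)"] mult.commute)
  then have "qsmult ?Q1 (qadd (qmult q n (D (qT j)) (qT i)) (qmult q n (qT j) (D (qT i))))
      = qsmult ?Q2 (qadd (qmult q n (D (qT i)) (qT j)) (qmult q n (qT i) (D (qT j))))"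
    using is_qder_qsmult_eq[OF D qmult_closed[OF Tj Ti]] is_qder_qsmult_eq[OF D qmult_closed[OF Ti Tj]]
      is_qder_qmult_eq[OF D Tj Ti] is_qder_qmult_eq[OF D Ti Tj] by metis
  note coeffs = fun_cong[OF this, of "(\<lambda>l. a l + expT i l + expT j l, b)"]
  have shift_i: "(\<lambda>l. a l + expT i l + expT j l - expT i l) = (\<lambda>l. a l + expT j l)"
    and shift_j: "(\<lambda>l. a l + expT i l + expT j l - expT j l) = (\<lambda>l. a l + expT i l)"
    by (simp_all add: fun_eq_iff)
  have "qmult q n (D (qT j)) (qT i) (\<lambda>l. a l + expT i l + expT j l, b)
      = qcoef q n (\<lambda>l. a l + expT j l) (expT i) * qder_coeff D j x"
    "qmult q n (qT j) (D (qT i)) (\<lambda>l. a l + expT i l + expT j l, b)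
      = qcoef q n (expT j) (\<lambda>l. a l + expT i l) * qder_coeff D i x"
    "qmult q n (D (qT i)) (qT j) (\<lambda>l. a l + expT i l + expT j l, b)
      = qcoef q n (\<lambda>l. a l + expT i l) (expT j) * qder_coeff D i x"
    "qmult q n (qT i) (D (qT j)) (\<lambda>l. a l + expT i l + expT j l, b)
      = qcoef q n (expT i) (\<lambda>l. a l + expT j l) * qder_coeff D j x"
    unfolding qmult_qT_right[OF fi] qmult_qT_right[OF fj] qmult_qT_left[OF fi] qmult_qT_left[OF fj]
    by (simp_all add: shift_i shift_j x qder_coeff_def)
  with coeffs have "?Q1 * (qcoef q n (\<lambda>l. a l + expT j l) (expT i) * qder_coeff D j x
        + qcoef q n (expT j) (\<lambda>l. a l + expT i l) * qder_coeff D i x)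
      = ?Q2 * (qcoef q n (\<lambda>l. a l + expT i l) (expT j) * qder_coeff D i x
        + qcoef q n (expT i) (\<lambda>l. a l + expT j l) * qder_coeff D j x)"
    by (simp add: qsmult_def qadd_def)
  then have "?Q1 * ?Q2 * (qcoef q n a (expT i) * qder_coeff D j x + qcoef q n (expT j) a * qder_coeff D i x)
      = ?Q1 * ?Q2 * (qcoef q n a (expT j) * qder_coeff D i x + qcoef q n (expT i) a * qder_coeff D j x)"
    unfolding qcoef_add_left qcoef_add_right by (simp add: algebra_simps)
  then have "qcoef q n a (expT i) * qder_coeff D j x + qcoef q n (expT j) a * qder_coeff D i x
      = qcoef q n a (expT j) * qder_coeff D i x + qcoef q n (expT i) a * qder_coeff D j x"
    using qcoef_nonzero by simp
  then show ?thesis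
    unfolding commutator_coeff_def x fst_conv by (simp add: algebra_simps)
qed

text \<open>Where all commutator coefficients of \<open>a \<noteq> 0\<close> vanish, \<open>T\<^sup>a\<close> would be central.\<close>

lemma qder_coeff_eq_0_if_commutator_coeffs_vanish:
  assumes simple: "qtorus_simple q n" and D: "is_qder q n m D" and i: "i < n"
    and commuting: "\<forall>k<n. commutator_coeff k (fst x) = 0" and nonzero: "fst x \<noteq> (\<lambda>_. 0)"
  shows "qder_coeff D i x = 0"
proof (rule ccontr)
  assume "qder_coeff D i x \<noteq> 0"
  then have "x \<in> exps n m"
    using qder_coeff_closed[of i n D m, OF i is_qder_closed[OF D qT_closed[OF i]]]
    by (auto simp: qcarrier_iff qsupp_def)
  then have "fst x = (\<lambda>_. 0)"
    using commuting by (intro qtorus_simple_commuting_exp_eq_0[OF simple])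
      (auto simp: exps_iff commutator_coeff_def)
  with nonzero show False ..
qed

text \<open>\<open>u\<close> is read off from any index \<open>i\<close> with nonzero commutator coefficient; the cross
  relation makes the choice irrelevant.\<close>

lemma qder_coeff_decomposition:
  assumes simple: "qtorus_simple q n" and D: "is_qder q n m D"
  obtains u z where "u \<in> qcarrier n m" "\<forall>i<n. z i \<in> polyX n m"
    "\<And>i x. i < n \<Longrightarrow> qder_coeff D i x = u x * commutator_coeff i (fst x) + z i x"
proof -
  have G: "qder_coeff D i \<in> qcarrier n m" if "i < n" for i
    using that is_qder_closed[OF D qT_closed[OF that]] by (rule qder_coeff_closed)
  define sel where "sel a = (SOME i. i < n \<and> commutator_coeff i a \<noteq> 0)" for a
  define u where "u x = (if \<exists>i<n. commutator_coeff i (fst x) \<noteq> 0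
      then qder_coeff D (sel (fst x)) x / commutator_coeff (sel (fst x)) (fst x) else 0)" for x
  define z where "z i x = (if fst x = (\<lambda>_. 0) then qder_coeff D i x else 0)" for i x
  have sel: "sel (fst x) < n \<and> commutator_coeff (sel (fst x)) (fst x) \<noteq> 0"
    if "\<exists>i<n. commutator_coeff i (fst x) \<noteq> 0" for x
    unfolding sel_def using someI_ex[OF that] .
  have "qsupp u \<subseteq> (\<Union>i<n. qsupp (qder_coeff D i))"
  proof
    fix x assume "x \<in> qsupp u"
    then have "\<exists>i<n. commutator_coeff i (fst x) \<noteq> 0" and nz: "qder_coeff D (sel (fst x)) x \<noteq> 0"
      by (auto simp: qsupp_def u_def split: if_splits)
    then have "sel (fst x) < n"
      using sel by blast
    with nz show "x \<in> (\<Union>i<n. qsupp (qder_coeff D i))"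
      by (auto simp: qsupp_def)
  qed
  then have u: "u \<in> qcarrier n m"
    using G by (auto simp: qcarrier_iff intro: finite_subset)
  have z: "z i \<in> polyX n m" if "i < n" for i
  proof -
    have "qsupp (z i) \<subseteq> qsupp (qder_coeff D i)"
      by (auto simp: qsupp_def z_def)
    then show ?thesis
      using G[OF that] by (auto simp: polyX_def qcarrier_iff z_def intro: finite_subset)
  qed
  have "qder_coeff D i x = u x * commutator_coeff i (fst x) + z i x" if i: "i < n" for i x
  proof (cases "\<exists>k<n. commutator_coeff k (fst x) \<noteq> 0")
    case True
    with sel have s: "sel (fst x) < n" "commutator_coeff (sel (fst x)) (fst x) \<noteq> 0"
      by blast+
    then have "fst x \<noteq> (\<lambda>_. 0)"
      by auto
    with True s qder_coeff_cross_relation[OF D i s(1), of x] show ?thesis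
      by (simp add: u_def z_def field_simps)
  next
    case False
    show ?thesis
    proof (cases "fst x = (\<lambda>_. 0)")
      case True
      with False show ?thesis
        by (simp add: u_def z_def)
    next
      case nonzero: False
      have "qder_coeff D i x = 0"
        using False nonzero by (intro qder_coeff_eq_0_if_commutator_coeffs_vanish[OF simple D i]) auto
      with False nonzero show ?thesis
        by (auto simp: u_def z_def)
    qed
  qed
  with u z that show ?thesis
    by blast
qed

lemma qcomb_qT_coeff:
  assumes u: "u \<in> qcarrier n m" and k: "k < n" and z: "z k \<in> polyX n m"
  shows "qder_coeff (qcomb q n m u z w) k x = u x * commutator_coeff k (fst x) + z k x"
proof -
  have fin: "finite (qsupp u)" "finite (qsupp (z k))"
    using u z by (simp_all add: qcarrier_iff polyX_def)
  have z0: "z k x = 0" if "fst x \<noteq> (\<lambda>_. 0)"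
    using z that by (cases x) (auto simp: polyX_def)
  let ?y = "(\<lambda>l. fst x l + expT k l, snd x)"
  have shift: "(\<lambda>l. fst ?y l - expT k l, snd ?y) = x"
    by simp
  have "(\<Sum>i<n. qmult q n (z i) (qDT i (qT k)) ?y) = (\<Sum>i<n. if i = k then qmult q n (z k) (qT k) ?y else 0)"
    by (intro sum.cong refl) (simp add: qDT_qT)
  also have "\<dots> = qmult q n (z k) (qT k) ?y"
    using k by simp
  finally have "qder_coeff (qcomb q n m u z w) k x
      = qcoef q n (fst x) (expT k) * u x - qcoef q n (expT k) (fst x) * u x
        + qcoef q n (fst x) (expT k) * z k x"
    unfolding qder_coeff_def qcomb_def qad_def
    by (simp add: qDX_qT qmult_qT_left[OF fin(1)] qmult_qT_right[OF fin(1)] qmult_qT_right[OF fin(2)]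
)
  then show ?thesis
    using z0 by (cases "fst x = (\<lambda>_. 0)") (auto simp: commutator_coeff_def algebra_simps)
qed

lemma qcomb_qX:
  assumes u: "u \<in> qcarrier n m" and j: "j < m" and w: "w j \<in> qcarrier n m"
  shows "qcomb q n m u z w (qX j) = w j"
proof -
  have "qad q n u (qX j) = qzero"
    using polyX_qmult_commute[OF qX_polyX[OF j] u] by (simp add: qad_def fun_eq_iff)
  moreover have "(\<Sum>l<m. qmult q n (w l) (qDX l (qX j)) x) = w j x" for x
  proof -
    have "(\<Sum>l<m. qmult q n (w l) (qDX l (qX j)) x) = (\<Sum>l<m. if l = j then w j x else 0)"
      by (intro sum.cong refl) (simp add: qDX_qX qmult_qone_right[OF w])
    also have "\<dots> = w j x"
      using j by simp
    finally show ?thesis .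
  qed
  ultimately show ?thesis
    by (simp add: qcomb_def qDT_qX fun_eq_iff)
qed

lemma is_qder_qX_qcenter:
  assumes D: "is_qder q n m D" and j: "j < m"
  shows "D (qX j) \<in> qcenter q n m"
proof -
  note X = qX_closed[OF j] and X_comm = polyX_qmult_commute[OF qX_polyX[OF j]]
  have "qmult q n (D (qX j)) f = qmult q n f (D (qX j))" if f: "f \<in> qcarrier n m" for f
  proof -
    have "D (qmult q n (qX j) f) = D (qmult q n f (qX j))"
      using X_comm[OF f] by simp
    then have "qadd (qmult q n (D (qX j)) f) (qmult q n (qX j) (D f))
        = qadd (qmult q n (D f) (qX j)) (qmult q n f (D (qX j)))"
      using is_qder_qmult_eq[OF D X f] is_qder_qmult_eq[OF D f X] by simp
    then show ?thesis
      using X_comm[OF is_qder_closed[OF D f]] by (simp add: qadd_def fun_eq_iff)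
  qed
  then show ?thesis
    using is_qder_closed[OF D X] by (simp add: qcenter_def)
qed

lemma is_qder_iff_qcomb:
  assumes simple: "qtorus_simple q n"
  shows "is_qder q n m D \<longleftrightarrow>
    (\<exists>u\<in>qcarrier n m. \<exists>z w. (\<forall>i<n. z i \<in> qcenter q n m) \<and> (\<forall>j<m. w j \<in> qcenter q n m)
       \<and> (\<forall>f\<in>qcarrier n m. D f = qcomb q n m u z w f))"
proof
  assume D: "is_qder q n m D"
  obtain u z where u: "u \<in> qcarrier n m" and z: "\<forall>i<n. z i \<in> polyX n m"
    and coeff: "\<And>i x. i < n \<Longrightarrow> qder_coeff D i x = u x * commutator_coeff i (fst x) + z i x"
    using qder_coeff_decomposition[OF simple D] by blast
  define w where "w j = D (qX j)" for j
  have w: "\<forall>j<m. w j \<in> qcenter q n m"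
    unfolding w_def using is_qder_qX_qcenter[OF D] by blast
  have zc: "\<forall>i<n. z i \<in> qcenter q n m"
    using z polyX_subset_qcenter by blast
  define E where "E f = (\<lambda>x. D f x - qcomb q n m u z w f x)" for f
  have "E = (\<lambda>f. qadd (D f) (qsmult (-1) (qcomb q n m u z w f)))"
    by (simp add: E_def qadd_def qsmult_def fun_eq_iff)
  then have E: "is_qder q n m E"
    using D is_qder_qcomb[OF u zc w] by (simp add: is_qder_qadd is_qder_qsmult)
  have "E (qT k) = qzero" if k: "k < n" for k
  proof
    fix y :: qexp
    let ?x = "(\<lambda>l. fst y l - expT k l, snd y)"
    have "D (qT k) y = qder_coeff D k ?x" and "qcomb q n m u z w (qT k) y = qder_coeff (qcomb q n m u z w) k ?x"
      by (simp_all add: qder_coeff_def)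
    then show "E (qT k) y = qzero y"
      using coeff[OF k, of ?x] qcomb_qT_coeff[OF u k] z k by (simp add: E_def)
  qed
  moreover have "E (qX j) = qzero" if "j < m" for j
    using qcomb_qX[OF u that, of w z] w that by (simp add: E_def w_def qcenter_def fun_eq_iff)
  ultimately have "\<forall>f\<in>qcarrier n m. D f = qcomb q n m u z w f"
    using is_qder_eq_qzeroI[OF E] by (simp add: E_def fun_eq_iff)
  with u zc w show "\<exists>u\<in>qcarrier n m. \<exists>z w. (\<forall>i<n. z i \<in> qcenter q n m) \<and> (\<forall>j<m. w j \<in> qcenter q n m)
       \<and> (\<forall>f\<in>qcarrier n m. D f = qcomb q n m u z w f)"
    by blast
next
  assume "\<exists>u\<in>qcarrier n m. \<exists>z w. (\<forall>i<n. z i \<in> qcenter q n m) \<and> (\<forall>j<m. w j \<in> qcenter q n m)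
       \<and> (\<forall>f\<in>qcarrier n m. D f = qcomb q n m u z w f)"
  then show "is_qder q n m D"
    using is_qder_qcomb is_qder_cong by metis
qed

lemma qcomb_eq_qzero_components:
  assumes simple: "qtorus_simple q n" and u: "u \<in> qcarrier n m"
    and z: "\<forall>i<n. z i \<in> qcenter q n m" and w: "\<forall>j<m. w j \<in> qcenter q n m"
    and comb: "\<forall>f\<in>qcarrier n m. qcomb q n m u z w f = qzero"
  shows "(\<forall>f\<in>qcarrier n m. qad q n u f = qzero)
    \<and> (\<forall>i<n. \<forall>f\<in>qcarrier n m. qmult q n (z i) (qDT i f) = qzero)
    \<and> (\<forall>j<m. \<forall>f\<in>qcarrier n m. qmult q n (w j) (qDX j f) = qzero)"
proof -
  have w0: "w j = qzero" if j: "j < m" for j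
  proof -
    have "w j = qcomb q n m u z w (qX j)"
      using qcomb_qX[OF u j] w j by (simp add: qcenter_def)
    also have "\<dots> = qzero"
      using comb qX_closed[OF j] by blast
    finally show ?thesis .
  qed
  have z0: "z k = qzero" if k: "k < n" for k
  proof
    fix x :: qexp
    have zk: "z k \<in> polyX n m"
      using z k qcenter_subset_polyX[OF simple] by auto
    show "z k x = qzero x"
    proof (cases "fst x = (\<lambda>_. 0)")
      case True
      have "qcomb q n m u z w (qT k) = qzero"
        using comb qT_closed[OF k] by blast
      then have "qder_coeff (qcomb q n m u z w) k x = 0"
        by (simp add: qder_coeff_def)
      then show ?thesis
        using qcomb_qT_coeff[where z = z, OF u k zk] True by simp
    next
      case False
      then show ?thesis
        using zk by (cases x) (auto simp: polyX_def)
    qed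
  qed
  have "qad q n u f = qzero" if "f \<in> qcarrier n m" for f
    using comb that z0 w0 by (simp add: qcomb_def fun_eq_iff)
  with z0 w0 show ?thesis
    by simp
qed

end

theorem corollary2p2:
  fixes q :: "nat \<Rightarrow> nat \<Rightarrow> 'k::field_char_0" and n m :: nat
  assumes "mult_skew q n" and "qtorus_simple q n"
  shows "qcenter q n m = polyX n m
    \<and> (\<forall>i<n. is_qder q n m (qDT i)
          \<and> (\<forall>k<n. qDT i (qT k) = (if i = k then qT k else qzero))
          \<and> (\<forall>k<m. qDT i (qX k) = qzero))
    \<and> (\<forall>j<m. is_qder q n m (qDX j)
          \<and> (\<forall>k<n. qDX j (qT k) = qzero)
          \<and> (\<forall>k<m. qDX j (qX k) = (if j = k then qone else qzero)))
    \<and> (\<forall>D. is_qder q n m D \<longleftrightarrow>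
          (\<exists>u\<in>qcarrier n m. \<exists>z w. (\<forall>i<n. z i \<in> qcenter q n m) \<and> (\<forall>j<m. w j \<in> qcenter q n m)
             \<and> (\<forall>f\<in>qcarrier n m. D f = qcomb q n m u z w f)))
    \<and> (\<forall>u\<in>qcarrier n m. \<forall>z w. (\<forall>i<n. z i \<in> qcenter q n m) \<and> (\<forall>j<m. w j \<in> qcenter q n m)
          \<and> (\<forall>f\<in>qcarrier n m. qcomb q n m u z w f = qzero)
          \<longrightarrow> (\<forall>f\<in>qcarrier n m. qad q n u f = qzero)
            \<and> (\<forall>i<n. \<forall>f\<in>qcarrier n m. qmult q n (z i) (qDT i f) = qzero)
            \<and> (\<forall>j<m. \<forall>f\<in>qcarrier n m. qmult q n (w j) (qDX j f) = qzero))"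
proof -
  interpret quantum_torus q n
    by unfold_locales (rule assms(1))
  show ?thesis
    by (intro conjI)
      ((rule qcenter_eq_polyX[OF assms(2)]),
       (simp add: is_qder_qDT qDT_qT qDT_qX),
       (simp add: is_qder_qDX qDX_qT qDX_qX),
       (intro allI is_qder_iff_qcomb[OF assms(2)]),
       (intro ballI allI impI qcomb_eq_qzero_components[OF assms(2)]; simp))
qed

end
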